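(* Let $\alpha\in(0,1)$, $\tau\in(0,1]$, $\lambda\in[0,\tau)$, $0\le W_0\le\alpha$, and $\{\gamma_j\}_{j\ge0}$ nonnegative, nonincreasing with $\sum_j\gamma_j=1$. Run the ADDIS$^*$ algorithm (defined in the context) on $p$-values $P_1,P_2,\dots$. Then for every $t$, $\alpha_t$ is a monotonic function of the past, $\tau>\lambda\ge\alpha_t$, and $\widehat{\mathrm{FDP}}_{\mathrm{ADDIS}}(t)\le\alpha$ (with $\lambda_j\equiv\lambda$, $\tau_j\equiv\tau$). Consequently, if the null $p$-values are conditionally uniformly conservative then $\mathrm{mFDR}(t)\le\alpha$ for all $t$, and if moreover the null $p$-values are independent of each other and of the non-nulls then $\mathrm{FDR}(t)\le\alpha$ for all $t$.
   Context: Setting: $p$-values $P_1,P_2,\dots$ for hypotheses $H_1,H_2,\dots$, $\mathcal H_0$ the set of true null indices; with $\lambda_j\equiv\lambda,\tau_j\equiv\tau$, indicators $S_j=\mathbf 1\{P_j\le\tau\}$, $C_j=\mathbf 1\{P_j\le\lambda\}$, $R_j=\mathbf 1\{P_j\le\alpha_j\}$, $R(t)=\{j\le t:R_j=1\}$, $\mathcal F^t=\sigma(R_{1:t},C_{1:t},S_{1:t})$. ADDIS$^*$ algorithm: at time $t$ reject $H_t$ iff $P_t\le\alpha_t$, where $\alpha_t=\min\{\lambda,\hat\alpha_t\}$ and $$\hat\alpha_t=(\tau-\lambda)\Big(W_0\gamma_{S^t-C_{0+}}+(\alpha-W_0)\gamma_{S^t-\kappa_1^*-C_{1+}}+\alpha\sum_{j\ge2}\gamma_{S^t-\kappa_j^*-C_{j+}}\Big),$$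 with $S^t=\sum_{i<t}\mathbf 1\{P_i\le\tau\}$; for $j\ge1$, $\kappa_j=\min\{i\in[t-1]:\sum_{k\le i}\mathbf 1\{P_k\le\alpha_k\}\ge j\}$ (the time of the $j$-th rejection), and $\kappa_0=0$; $\kappa_j^*=\sum_{i\le\kappa_j}\mathbf 1\{P_i\le\tau\}$; $C_{j+}=\sum_{i=\kappa_j+1}^{t-1}\mathbf 1\{P_i\le\lambda\}$; terms involving $\kappa_j$ for $j$ larger than the number of rejections before time $t$ are omitted (set to zero). Null $p$-values are conditionally uniformly conservative if for every $t\in\mathcal H_0$ and all $x,\tau'\in(0,1)$, $\Pr(P_t/\tau'\le x\mid P_t\le\tau',\mathcal F^{t-1})\le x$. $\widehat{\mathrm{FDP}}_{\mathrm{ADDIS}}(t)=\big(\sum_{j\le t}\alpha_j\frac{\mathbf 1\{\lambda_j<P_j\le\tau_j\}}{\tau_j-\lambda_j}\big)/(|R(t)|\vee1)$; $\mathrm{FDR}(t)=\mathbb E[|\mathcal H_0\cap R(t)|/(|R(t)|\vee1)]$, $\mathrm{mFDR}(t)=\mathbb E[|\mathcal H_0\cap R(t)|]/\mathbb E[|R(t)|\vee1]$. A function of $(R_{1:t-1},C_{1:t-1},S_{1:t-1})$ is a monotonic function of the past if it is coordinatewise nondecreasing in each $R_i$ and $C_i$ and coordinatewise nonincreasing in each $S_i$. *)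

theory Defs
  imports "HOL-Probability.Probability"
begin

text \<open>Parameters: a = alpha (target level), ta = tau, la = lambda, W0, g = gamma sequence.
  Time indices start at 1; index 0 of a p-value sequence is never used.\<close>

text \<open>The un-truncated ADDIS* level hat-alpha_t as a function of the past indicators
  R_i, C_i, S_i for 1 <= i < t.  cntS k = number of i with k < i < t and S_i
  (so cntS 0 = S^t and cntS kappa_j = S^t - kappa_j^*), cntC k = C_{j+}.
  ks is the increasing list of rejection times kappa_1 < kappa_2 < ... before t
  (ks ! 0 = kappa_1 carries weight a - W0, later ones weight a).\<close>
definition addis_hat ::
  "real \<Rightarrow> real \<Rightarrow> real \<Rightarrow> real \<Rightarrow> (nat \<Rightarrow> real) \<Rightarrow> nat \<Rightarrow>
   (nat \<Rightarrow> bool) \<Rightarrow> (nat \<Rightarrow> bool) \<Rightarrow> (nat \<Rightarrow> bool) \<Rightarrow> real" where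
  "addis_hat a ta la W0 g t R C S =
    (let cntS = (\<lambda>k. card {i. k < i \<and> i < t \<and> S i});
         cntC = (\<lambda>k. card {i. k < i \<and> i < t \<and> C i});
         ks = sorted_list_of_set {i. 1 \<le> i \<and> i < t \<and> R i}
     in (ta - la) * (W0 * g (cntS 0 - cntC 0)
          + (\<Sum>j < length ks. (if j = 0 then a - W0 else a) * g (cntS (ks ! j) - cntC (ks ! j)))))"

primrec addis_hist ::
  "real \<Rightarrow> real \<Rightarrow> real \<Rightarrow> real \<Rightarrow> (nat \<Rightarrow> real) \<Rightarrow> (nat \<Rightarrow> real) \<Rightarrow> nat \<Rightarrow> (nat \<Rightarrow> bool)" where
  "addis_hist a ta la W0 g P 0 = (\<lambda>_. False)"
| "addis_hist a ta la W0 g P (Suc t) =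
     (addis_hist a ta la W0 g P t)(Suc t :=
        P (Suc t) \<le> min la (addis_hat a ta la W0 g (Suc t) (addis_hist a ta la W0 g P t)
                                (\<lambda>i. P i \<le> la) (\<lambda>i. P i \<le> ta)))"

definition addis_alpha ::
  "real \<Rightarrow> real \<Rightarrow> real \<Rightarrow> real \<Rightarrow> (nat \<Rightarrow> real) \<Rightarrow> (nat \<Rightarrow> real) \<Rightarrow> nat \<Rightarrow> real" where
  "addis_alpha a ta la W0 g P t =
     min la (addis_hat a ta la W0 g t (addis_hist a ta la W0 g P (t - 1))
               (\<lambda>i. P i \<le> la) (\<lambda>i. P i \<le> ta))"

definition addis_rej ::
  "real \<Rightarrow> real \<Rightarrow> real \<Rightarrow> real \<Rightarrow> (nat \<Rightarrow> real) \<Rightarrow> (nat \<Rightarrow> real) \<Rightarrow> nat \<Rightarrow> bool" where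
  "addis_rej a ta la W0 g P j = (P j \<le> addis_alpha a ta la W0 g P j)"

definition addis_Rset ::
  "real \<Rightarrow> real \<Rightarrow> real \<Rightarrow> real \<Rightarrow> (nat \<Rightarrow> real) \<Rightarrow> (nat \<Rightarrow> real) \<Rightarrow> nat \<Rightarrow> nat set" where
  "addis_Rset a ta la W0 g P t = {j. 1 \<le> j \<and> j \<le> t \<and> addis_rej a ta la W0 g P j}"

definition addis_FDP_hat ::
  "real \<Rightarrow> real \<Rightarrow> real \<Rightarrow> real \<Rightarrow> (nat \<Rightarrow> real) \<Rightarrow> (nat \<Rightarrow> real) \<Rightarrow> nat \<Rightarrow> real" where
  "addis_FDP_hat a ta la W0 g P t =
     (\<Sum>j = 1..t. addis_alpha a ta la W0 g P j * (if la < P j \<and> P j \<le> ta then 1 else 0) / (ta - la))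
     / real (max (card (addis_Rset a ta la W0 g P t)) 1)"

definition monotone_past :: "nat \<Rightarrow> ((nat \<Rightarrow> bool) \<Rightarrow> (nat \<Rightarrow> bool) \<Rightarrow> (nat \<Rightarrow> bool) \<Rightarrow> real) \<Rightarrow> bool" where
  "monotone_past t f \<longleftrightarrow>
     (\<forall>R C S R' C' S'. (\<forall>i\<in>{1..<t}. R i = R' i \<and> C i = C' i \<and> S i = S' i)
          \<longrightarrow> f R C S = f R' C' S') \<and>
     (\<forall>R C S R' C' S'. (\<forall>i\<in>{1..<t}. (R i \<longrightarrow> R' i) \<and> (C i \<longrightarrow> C' i) \<and> (S' i \<longrightarrow> S i))
          \<longrightarrow> f R C S \<le> f R' C' S')"

definition addis_past_sets ::
  "'w measure \<Rightarrow> real \<Rightarrow> real \<Rightarrow> real \<Rightarrow> real \<Rightarrow> (nat \<Rightarrow> real) \<Rightarrow> (nat \<Rightarrow> 'w \<Rightarrow> real) \<Rightarrow> nat \<Rightarrow> 'w set set" where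
  "addis_past_sets M a ta la W0 g Pv t =
     sigma_sets (space M)
       (\<Union>i\<in>{1..<t}. {{\<omega> \<in> space M. addis_rej a ta la W0 g (\<lambda>j. Pv j \<omega>) i},
                      {\<omega> \<in> space M. Pv i \<omega> \<le> la},
                      {\<omega> \<in> space M. Pv i \<omega> \<le> ta}})"

text \<open>Null p-values are conditionally uniformly conservative:
  Pr(P_t/tau' <= x | P_t <= tau', F^{t-1}) <= x, expressed (as the definition of conditional
  probability given an event and a sigma-algebra) by: for every E in F^{t-1},
  Pr(P_t/tau' <= x, P_t <= tau', E) <= x * Pr(P_t <= tau', E).\<close>
definition cond_unif_conservative ::
  "'w measure \<Rightarrow> real \<Rightarrow> real \<Rightarrow> real \<Rightarrow> real \<Rightarrow> (nat \<Rightarrow> real) \<Rightarrow> (nat \<Rightarrow> 'w \<Rightarrow> real) \<Rightarrow> nat set \<Rightarrow> bool" where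
  "cond_unif_conservative M a ta la W0 g Pv H0 \<longleftrightarrow>
     (\<forall>t\<in>H0. \<forall>x\<in>{0<..<1}. \<forall>\<tau>'\<in>{0<..<1}. \<forall>E\<in>addis_past_sets M a ta la W0 g Pv t.
        measure M ({\<omega> \<in> space M. Pv t \<omega> / \<tau>' \<le> x \<and> Pv t \<omega> \<le> \<tau>'} \<inter> E)
          \<le> x * measure M ({\<omega> \<in> space M. Pv t \<omega> \<le> \<tau>'} \<inter> E))"

text \<open>The null p-values are mutually independent and independent of the (block of) non-null
  p-values: the sigma-algebras sigma(P_t), t in H0, and sigma(P_j : j >= 1, j not in H0)
  are mutually independent.\<close>
definition nulls_independent :: "'w measure \<Rightarrow> (nat \<Rightarrow> 'w \<Rightarrow> real) \<Rightarrow> nat set \<Rightarrow> bool" where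
  "nulls_independent M Pv H0 \<longleftrightarrow>
     prob_space.indep_sets M
       (\<lambda>k. case k of
              Some t \<Rightarrow> sets (vimage_algebra (space M) (Pv t) borel)
            | None \<Rightarrow> sigma_sets (space M)
                 (\<Union>j\<in>{j. 1 \<le> j \<and> j \<notin> H0}. sets (vimage_algebra (space M) (Pv j) borel)))
       (insert None (Some ` H0))"

end

theory Submission
  imports Defs
begin

text \<open>For the estimate of the false discovery proportion,
  the candidates (la < P_j \<le> ta) after a rejection at time k each pick up a weight
  g(number of earlier candidates after k); these are distinct terms of a sequence summing to 1,
  so the numerator is at most W0 + (a - W0) + a (|R(t)| - 1).

  For a null j, conditional conservativeness on the events {past = A} of F^{j-1} gives
  P(P_j \<le> alpha_j) \<le> E[alpha_j 1{la < P_j \<le> ta}] / (ta - la), and summing yields the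
  mFDR bound. For the FDR, condition on the other p-values instead: zeroing a rejected P_j does
  not change R(t), raising a candidate to ta does not either, and by monotonicity the zeroed
  version rejects at least as much, so the same inequality holds with the weight 1/|R(t)|.\<close>

lemma sum_sorted_list_of_set_first_weight:
  fixes c b :: real
  assumes "finite X"
  shows "(\<Sum>j<length (sorted_list_of_set X). (if j = 0 then c else b) * f (sorted_list_of_set X ! j))
       = (\<Sum>k\<in>X. (if k = Min X then c else b) * f k)"
proof (cases "X = {}")
  case True
  then show ?thesis by simp
next
  case False
  let ?ks = "sorted_list_of_set (X - {Min X})"
  have ks: "sorted_list_of_set X = Min X # ?ks"
    using sorted_list_of_set_nonempty[OF assms False] .
  have min: "Min X \<in> X" using assms False by simp
  have "(\<Sum>j<length ?ks. b * f (?ks ! j)) = sum_list (map (\<lambda>k. b * f k) ?ks)"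
    by (simp add: sum_list_sum_nth atLeast0LessThan)
  also have "\<dots> = (\<Sum>k\<in>X - {Min X}. b * f k)"
    using assms by (subst sum_list_distinct_conv_sum_set) auto
  finally have tail: "(\<Sum>j<length ?ks. b * f (?ks ! j)) = (\<Sum>k\<in>X - {Min X}. b * f k)" .
  have "(\<Sum>k\<in>X. (if k = Min X then c else b) * f k)
      = c * f (Min X) + (\<Sum>k\<in>X - {Min X}. (if k = Min X then c else b) * f k)"
    using assms min by (simp add: sum.remove)
  also have "(\<Sum>k\<in>X - {Min X}. (if k = Min X then c else b) * f k) = (\<Sum>k\<in>X - {Min X}. b * f k)"
    by (intro sum.cong) auto
  finally show ?thesis
    unfolding ks tail[symmetric] by (simp add: sum.lessThan_Suc_shift del: sum.lessThan_Suc)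
qed

lemma sum_rank_le:
  fixes g :: "nat \<Rightarrow> real" and V :: "'a::linorder set"
  assumes "\<And>n. 0 \<le> g n" "g sums s" "finite V"
  shows "(\<Sum>j\<in>V. g (card {i\<in>V. i < j})) \<le> s"
proof -
  have "(\<Sum>j\<in>V. g (card {i\<in>V. i < j})) = (\<Sum>m<card V. g m)"
    using \<open>finite V\<close>
  proof (induction V rule: finite_linorder_max_induct)
    case empty
    then show ?case by simp
  next
    case (insert b A)
    have "(\<Sum>j\<in>A. g (card {i\<in>insert b A. i < j})) = (\<Sum>j\<in>A. g (card {i\<in>A. i < j}))"
      using insert by (intro sum.cong) (auto intro!: arg_cong[where f=g] arg_cong[where f=card])
    moreover have "{i\<in>insert b A. i < b} = A" using insert by auto
    moreover have "b \<notin> A" using insert by auto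
    ultimately show ?case using insert by (simp add: sum.insert)
  qed
  also have "\<dots> \<le> suminf g"
    using assms by (intro sum_le_suminf) (auto simp: sums_iff)
  also have "\<dots> = s" using assms by (simp add: sums_iff)
  finally show ?thesis .
qed

lemma Min_eq_of_downward_closed:
  assumes "finite Y" "X \<subseteq> Y" "X \<noteq> {}" "\<And>x y. x \<in> X \<Longrightarrow> y \<in> Y \<Longrightarrow> y \<le> x \<Longrightarrow> y \<in> X"
  shows "Min X = Min Y"
proof -
  have "finite X" using finite_subset[OF assms(2,1)] .
  obtain x where x: "x \<in> X" using assms by auto
  have "Min Y \<in> Y" using assms by (intro Min_in) auto
  moreover have "Min Y \<le> x" using assms x by auto
  ultimately have "Min Y \<in> X" using assms(4)[OF x] by blast
  then show ?thesis
    using Min_le[OF \<open>finite X\<close>] Min_antimono[OF assms(2,3,1)] by (meson antisym)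
qed

lemma sets_Collect_pattern_eq:
  assumes "finite I" "\<And>x. x \<in> I \<Longrightarrow> {\<omega>\<in>space N. b x \<omega>} \<in> sets N"
  shows "{\<omega>\<in>space N. {x\<in>I. b x \<omega>} = A} \<in> sets N"
  using assms
proof (induction I arbitrary: A rule: finite_induct)
  case empty
  then show ?case by (cases "A = {}") auto
next
  case (insert y I)
  have "{\<omega>\<in>space N. {x\<in>insert y I. b x \<omega>} = A}
      = {\<omega>\<in>space N. (b y \<omega> \<longleftrightarrow> y \<in> A)} \<inter> {\<omega>\<in>space N. {x\<in>I. b x \<omega>} = A - {y}}"
    using insert(2) by (auto; blast)
  moreover have "{\<omega>\<in>space N. (b y \<omega> \<longleftrightarrow> y \<in> A)} \<in> sets N"
  proof (cases "y \<in> A")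
    case True
    then show ?thesis using insert by simp
  next
    case False
    then have "{\<omega>\<in>space N. (b y \<omega> \<longleftrightarrow> y \<in> A)} = space N - {\<omega>\<in>space N. b y \<omega>}" by auto
    then show ?thesis using insert by auto
  qed
  ultimately show ?case using insert by auto
qed

lemma measurable_pattern:
  assumes "finite I" "\<And>x. x \<in> I \<Longrightarrow> {\<omega>\<in>space N. b x \<omega>} \<in> sets N" "\<And>A. h A \<in> space M'"
  shows "(\<lambda>\<omega>. h {x\<in>I. b x \<omega>}) \<in> measurable N M'"
proof (rule measurableI)
  fix B assume "B \<in> sets M'"
  have "(\<lambda>\<omega>. h {x\<in>I. b x \<omega>}) -` B \<inter> space N
      = (\<Union>A\<in>{A\<in>Pow I. h A \<in> B}. {\<omega>\<in>space N. {x\<in>I. b x \<omega>} = A})"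
    by auto
  also have "\<dots> \<in> sets N" using assms by (intro sets.finite_UN sets_Collect_pattern_eq) auto
  finally show "(\<lambda>\<omega>. h {x\<in>I. b x \<omega>}) -` B \<inter> space N \<in> sets N" .
qed (use assms in simp)

locale addis_params =
  fixes a ta la W0 :: real and g :: "nat \<Rightarrow> real"
  assumes a_pos: "0 < a" and la_nonneg: "0 \<le> la" and la_less_ta: "la < ta"
    and W0_nonneg: "0 \<le> W0" and W0_le_a: "W0 \<le> a"
    and g_nonneg: "\<And>j. 0 \<le> g j" and g_Suc_le: "\<And>j. g (Suc j) \<le> g j" and g_sums: "g sums 1"
begin

abbreviation "hat \<equiv> addis_hat a ta la W0 g"
abbreviation "hist \<equiv> addis_hist a ta la W0 g"
abbreviation "lvl \<equiv> addis_alpha a ta la W0 g"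
abbreviation "rej \<equiv> addis_rej a ta la W0 g"
abbreviation "Rset \<equiv> addis_Rset a ta la W0 g"

lemma ta_pos: "0 < ta"
  using la_nonneg la_less_ta by simp

lemma g_antimono: "m \<le> n \<Longrightarrow> g n \<le> g m"
  using lift_Suc_antimono_le[of g, OF g_Suc_le] by blast

lemma finite_between: "finite {i::nat. k < i \<and> i < t \<and> Q i}"
  by (rule finite_subset[of _ "{..<t}"]) auto

lemma finite_Rset: "finite (Rset P T)"
  unfolding addis_Rset_def by (rule finite_subset[of _ "{1..T}"]) auto

subsection \<open>The level as a function of the past\<close>

lemma hat_cong_past:
  assumes "\<forall>i\<in>{1..<t}. R i = R' i \<and> C i = C' i \<and> S i = S' i"
  shows "hat t R C S = hat t R' C' S'"
proof -
  have "{i. k < i \<and> i < t \<and> S i} = {i. k < i \<and> i < t \<and> S' i}"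
    and "{i. k < i \<and> i < t \<and> C i} = {i. k < i \<and> i < t \<and> C' i}" for k
    using assms by (auto; metis atLeastLessThan_iff less_one not_less_eq not_less0 linorder_not_le)+
  moreover have "{i. 1 \<le> i \<and> i < t \<and> R i} = {i. 1 \<le> i \<and> i < t \<and> R' i}"
    using assms by auto
  ultimately show ?thesis unfolding addis_hat_def Let_def by simp
qed

lemma hist_stable: "i \<le> s \<Longrightarrow> hist P s i = hist P i i"
  by (induction s) (auto simp: le_Suc_eq)

lemma rej_eq_hist: "1 \<le> i \<Longrightarrow> rej P i = hist P i i"
  by (cases i) (auto simp: addis_rej_def addis_alpha_def)

lemma hist_eq_rej: "1 \<le> i \<Longrightarrow> i \<le> s \<Longrightarrow> hist P s i = rej P i"
  by (metis hist_stable rej_eq_hist)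

lemma hist_Suc: "hist P (Suc s) = (hist P s)(Suc s := rej P (Suc s))"
  by (simp add: addis_rej_def addis_alpha_def)

lemma lvl_eq_hat_rej: "1 \<le> t \<Longrightarrow> lvl P t = min la (hat t (rej P) (\<lambda>i. P i \<le> la) (\<lambda>i. P i \<le> ta))"
  unfolding addis_alpha_def
  by (intro arg_cong2[where f=min] refl hat_cong_past) (auto simp: hist_eq_rej)

definition wsum :: "real \<Rightarrow> nat set \<Rightarrow> (nat \<Rightarrow> real) \<Rightarrow> real" where
  "wsum c X f = (\<Sum>k\<in>X. (if k = Min X then c else a) * f k)"

lemma wsum_nonneg: "0 \<le> c \<Longrightarrow> (\<And>k. 0 \<le> f k) \<Longrightarrow> 0 \<le> wsum c X f"
  unfolding wsum_def using a_pos by (intro sum_nonneg mult_nonneg_nonneg) auto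

lemma wsum_mono:
  assumes "0 \<le> c" "\<And>k. k \<in> X \<Longrightarrow> f k \<le> f' k"
  shows "wsum c X f \<le> wsum c X f'"
  unfolding wsum_def using assms a_pos by (intro sum_mono mult_left_mono) auto

lemma wsum_insert_ge:
  assumes "finite X" "x \<notin> X" "0 \<le> c" "c \<le> a" "\<And>k. 0 \<le> f k"
  shows "wsum c X f \<le> wsum c (insert x X) f"
proof (cases "X = {}")
  case True
  then show ?thesis using assms by (simp add: wsum_def)
next
  case False
  have min: "Min X \<in> X" using assms False by simp
  have "wsum c X f = c * f (Min X) + (\<Sum>k\<in>X - {Min X}. (if k = Min X then c else a) * f k)"
    using assms min unfolding wsum_def by (simp add: sum.remove)
  also have "(\<Sum>k\<in>X - {Min X}. (if k = Min X then c else a) * f k) = (\<Sum>k\<in>X - {Min X}. a * f k)"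
    by (intro sum.cong) auto
  finally have split: "wsum c X f = c * f (Min X) + (\<Sum>k\<in>X - {Min X}. a * f k)" .
  show ?thesis
  proof (cases "x < Min X")
    case True
    then have "Min (insert x X) = x" using assms False by (simp add: Min_insert)
    then have "wsum c (insert x X) f = c * f x + (\<Sum>k\<in>X. a * f k)"
      using assms True unfolding wsum_def by (simp add: sum.insert) (intro sum.cong, auto)
    also have "(\<Sum>k\<in>X. a * f k) = a * f (Min X) + (\<Sum>k\<in>X - {Min X}. a * f k)"
      using assms min by (simp add: sum.remove)
    finally have "wsum c (insert x X) f = c * f x + a * f (Min X) + (\<Sum>k\<in>X - {Min X}. a * f k)"
      by simp
    moreover have "c * f (Min X) \<le> a * f (Min X)" using assms by (intro mult_right_mono) auto
    moreover have "0 \<le> c * f x" using assms by auto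
    ultimately show ?thesis using split by linarith
  next
    case False
    then have "Min X \<le> x" by simp
    then have "Min (insert x X) = Min X"
      by (metis Min_insert assms(1) \<open>X \<noteq> {}\<close> min.absorb2)
    moreover have "x \<noteq> Min X" using min assms by auto
    ultimately have "wsum c (insert x X) f = a * f x + wsum c X f"
      using assms unfolding wsum_def by (simp add: sum.insert)
    moreover have "0 \<le> a * f x" using assms a_pos by auto
    ultimately show ?thesis by linarith
  qed
qed

lemma wsum_mono_set:
  assumes "finite Y" "X \<subseteq> Y" "0 \<le> c" "c \<le> a" "\<And>k. 0 \<le> f k"
  shows "wsum c X f \<le> wsum c Y f"
proof -
  have "wsum c X f \<le> wsum c (X \<union> Z) f" if "finite Z" "Z \<subseteq> Y - X" for Z
    using that
  proof (induction rule: finite_subset_induct)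
    case (insert z Z)
    have "wsum c (X \<union> Z) f \<le> wsum c (insert z (X \<union> Z)) f"
      using insert assms finite_subset[OF assms(2,1)] by (intro wsum_insert_ge) auto
    then show ?case using insert by auto
  qed simp
  from this[of "Y - X"] show ?thesis using assms by (simp add: Un_absorb1)
qed

definition num_cand :: "nat \<Rightarrow> (nat \<Rightarrow> bool) \<Rightarrow> (nat \<Rightarrow> bool) \<Rightarrow> nat \<Rightarrow> nat" where
  "num_cand t C S k = card {i. k < i \<and> i < t \<and> S i \<and> \<not> C i}"

definition rej_before :: "nat \<Rightarrow> (nat \<Rightarrow> bool) \<Rightarrow> nat set" where
  "rej_before t R = {i. 1 \<le> i \<and> i < t \<and> R i}"

lemma hat_eq_wsum:
  assumes "\<And>i. C i \<Longrightarrow> S i"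
  shows "hat t R C S
    = (ta - la) * (W0 * g (num_cand t C S 0) + wsum (a - W0) (rej_before t R) (\<lambda>k. g (num_cand t C S k)))"
proof -
  have count: "card {i. k < i \<and> i < t \<and> S i} - card {i. k < i \<and> i < t \<and> C i} = num_cand t C S k" for k
  proof -
    have "{i. k < i \<and> i < t \<and> S i \<and> \<not> C i} = {i. k < i \<and> i < t \<and> S i} - {i. k < i \<and> i < t \<and> C i}"
      by auto
    moreover have "{i. k < i \<and> i < t \<and> C i} \<subseteq> {i. k < i \<and> i < t \<and> S i}" using assms by auto
    ultimately show ?thesis unfolding num_cand_def by (simp add: card_Diff_subset finite_between)
  qed
  have "finite (rej_before t R)"
    unfolding rej_before_def by (rule finite_subset[of _ "{..<t}"]) auto
  then show ?thesis
    unfolding addis_hat_def Let_def count wsum_def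
    using sum_sorted_list_of_set_first_weight[of "rej_before t R" "a - W0" a "\<lambda>k. g (num_cand t C S k)"]
    by (simp add: rej_before_def)
qed

text \<open>Replacing S by S \<or> C changes nothing along the algorithm (C \<subseteq> S there), but makes
  the truncated subtraction S - C in addis_hat a genuine count for arbitrary pasts, which
  is what monotonicity in C needs.\<close>
definition lvl_fun :: "nat \<Rightarrow> (nat \<Rightarrow> bool) \<Rightarrow> (nat \<Rightarrow> bool) \<Rightarrow> (nat \<Rightarrow> bool) \<Rightarrow> real" where
  "lvl_fun t R C S = min la (hat t R C (\<lambda>i. S i \<or> C i))"

lemma lvl_fun_eq: "lvl_fun t R C S = min la ((ta - la) *
    (W0 * g (num_cand t C S 0) + wsum (a - W0) (rej_before t R) (\<lambda>k. g (num_cand t C S k))))"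
proof -
  have "num_cand t C (\<lambda>i. S i \<or> C i) = num_cand t C S"
    unfolding num_cand_def by (intro ext arg_cong[where f=card]) auto
  then show ?thesis unfolding lvl_fun_def by (subst hat_eq_wsum) auto
qed

lemma lvl_eq_lvl_fun: "1 \<le> t \<Longrightarrow> lvl P t = lvl_fun t (rej P) (\<lambda>i. P i \<le> la) (\<lambda>i. P i \<le> ta)"
proof -
  assume t: "1 \<le> t"
  have "(\<lambda>i. P i \<le> ta \<or> P i \<le> la) = (\<lambda>i. P i \<le> ta)"
    using la_less_ta by (auto intro!: ext)
  then show ?thesis unfolding lvl_fun_def lvl_eq_hat_rej[OF t] by simp
qed

lemma lvl_fun_cong:
  assumes "\<forall>i\<in>{1..<t}. R i = R' i \<and> C i = C' i \<and> S i = S' i"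
  shows "lvl_fun t R C S = lvl_fun t R' C' S'"
  unfolding lvl_fun_def using assms by (intro arg_cong2[where f=min] refl hat_cong_past) auto

lemma lvl_fun_mono:
  assumes "\<forall>i\<in>{1..<t}. (R i \<longrightarrow> R' i) \<and> (C i \<longrightarrow> C' i) \<and> (S' i \<longrightarrow> S i)"
  shows "lvl_fun t R C S \<le> lvl_fun t R' C' S'"
proof -
  have cand: "num_cand t C' S' k \<le> num_cand t C S k" for k
    unfolding num_cand_def using assms by (intro card_mono finite_between) auto
  have fin: "finite (rej_before t R')"
    unfolding rej_before_def by (rule finite_subset[of _ "{..<t}"]) auto
  have "wsum (a - W0) (rej_before t R) (\<lambda>k. g (num_cand t C S k))
      \<le> wsum (a - W0) (rej_before t R) (\<lambda>k. g (num_cand t C' S' k))"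
    using W0_le_a cand g_antimono by (intro wsum_mono) auto
  also have "\<dots> \<le> wsum (a - W0) (rej_before t R') (\<lambda>k. g (num_cand t C' S' k))"
    using W0_le_a W0_nonneg g_nonneg assms fin by (intro wsum_mono_set) (auto simp: rej_before_def)
  finally have "wsum (a - W0) (rej_before t R) (\<lambda>k. g (num_cand t C S k))
      \<le> wsum (a - W0) (rej_before t R') (\<lambda>k. g (num_cand t C' S' k))" .
  moreover have "W0 * g (num_cand t C S 0) \<le> W0 * g (num_cand t C' S' 0)"
    using W0_nonneg cand g_antimono by (intro mult_left_mono) auto
  ultimately show ?thesis
    unfolding lvl_fun_eq using la_less_ta by (intro min.mono order.refl mult_left_mono) auto
qed

lemma monotone_past_lvl:
  "1 \<le> t \<Longrightarrow> \<exists>f. monotone_past t f \<and> (\<forall>P. lvl P t = f (rej P) (\<lambda>i. P i \<le> la) (\<lambda>i. P i \<le> ta))"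
  by (rule exI[of _ "lvl_fun t"])
    (auto simp: monotone_past_def lvl_eq_lvl_fun intro: lvl_fun_cong lvl_fun_mono)

lemma lvl_le_la: "lvl P t \<le> la"
  unfolding addis_alpha_def by simp

lemma lvl_fun_nonneg: "0 \<le> lvl_fun t R C S"
proof -
  have "0 \<le> wsum (a - W0) (rej_before t R) (\<lambda>k. g (num_cand t C S k))"
    using W0_le_a g_nonneg by (intro wsum_nonneg) auto
  moreover have "0 \<le> W0 * g (num_cand t C S 0)" using W0_nonneg g_nonneg by simp
  ultimately show ?thesis unfolding lvl_fun_eq using la_nonneg la_less_ta by simp
qed

lemma lvl_nonneg: "1 \<le> t \<Longrightarrow> 0 \<le> lvl P t"
  using lvl_eq_lvl_fun lvl_fun_nonneg by simp

subsection \<open>The estimated false discovery proportion\<close>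

lemma wsum_rej_before_eq:
  assumes "j \<le> T"
  shows "wsum (a - W0) (rej_before j (rej P)) f
    = (\<Sum>k\<in>Rset P T. if k < j then (if k = Min (Rset P T) then a - W0 else a) * f k else 0)"
proof -
  have before: "rej_before j (rej P) = {k \<in> Rset P T. k < j}"
    using assms unfolding rej_before_def addis_Rset_def by auto
  show ?thesis
  proof (cases "rej_before j (rej P) = {}")
    case True
    then show ?thesis using before by (auto simp: wsum_def intro: sum.neutral)
  next
    case False
    then have "Min (rej_before j (rej P)) = Min (Rset P T)"
      using finite_Rset unfolding before by (intro Min_eq_of_downward_closed) auto
    then show ?thesis
      unfolding wsum_def before using finite_Rset by (simp add: sum.inter_filter)
  qed
qed

lemma cand_weights_le_one:
  "(\<Sum>j = 1..T. if S j \<and> \<not> C j \<and> k < j then g (num_cand j C S k) else 0) \<le> 1"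
proof -
  define V where "V = {j \<in> {1..T}. S j \<and> \<not> C j \<and> k < j}"
  have "(\<Sum>j = 1..T. if S j \<and> \<not> C j \<and> k < j then g (num_cand j C S k) else 0)
      = (\<Sum>j\<in>V. g (num_cand j C S k))"
    unfolding V_def by (rule sum.inter_filter[symmetric]) simp
  also have "\<dots> = (\<Sum>j\<in>V. g (card {i\<in>V. i < j}))"
    unfolding num_cand_def
    by (intro sum.cong refl arg_cong[where f=g] arg_cong[where f=card]) (auto simp: V_def)
  also have "\<dots> \<le> 1" using g_nonneg g_sums by (intro sum_rank_le) (auto simp: V_def)
  finally show ?thesis .
qed

lemma rej_weights_le:
  assumes "finite X"
  shows "W0 + (\<Sum>k\<in>X. if k = Min X then a - W0 else a) \<le> a * real (max (card X) 1)"
proof (cases "X = {}")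
  case True
  then show ?thesis using W0_le_a by simp
next
  case False
  have min: "Min X \<in> X" and card: "card X \<ge> 1"
    using False assms by (auto simp: Suc_le_eq card_gt_0_iff)
  have "(\<Sum>k\<in>X - {Min X}. if k = Min X then a - W0 else a) = (\<Sum>k\<in>X - {Min X}. a)"
    by (intro sum.cong) auto
  also have "\<dots> = a * (real (card X) - 1)"
    using min assms card by (simp add: card_Diff_singleton of_nat_diff)
  finally have "(\<Sum>k\<in>X. if k = Min X then a - W0 else a) = a - W0 + a * (real (card X) - 1)"
    using min assms by (simp add: sum.remove)
  then show ?thesis using card by (simp add: algebra_simps max_def)
qed

lemma fdp_numerator_le:
  "(\<Sum>j = 1..T. lvl P j * (if la < P j \<and> P j \<le> ta then 1 else 0) / (ta - la))
    \<le> a * real (max (card (Rset P T)) 1)"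
proof -
  define C where "C i \<longleftrightarrow> P i \<le> la" for i
  define S where "S i \<longleftrightarrow> P i \<le> ta" for i
  define cand where "cand j = (if S j \<and> \<not> C j then 1 else (0::real))" for j
  define w where "w k = (if k = Min (Rset P T) then a - W0 else a)" for k
  define B where "B k = (\<Sum>j = 1..T. if S j \<and> \<not> C j \<and> k < j then g (num_cand j C S k) else 0)" for k
  have cand_eq: "(if la < P j \<and> P j \<le> ta then 1 else 0) = cand j" for j
    unfolding cand_def C_def S_def by auto
  have B_le: "B k \<le> 1" for k unfolding B_def by (rule cand_weights_le_one)
  have w_nonneg: "0 \<le> w k" for k unfolding w_def using W0_le_a a_pos by auto
  have term_le: "lvl P j * cand j / (ta - la)
      \<le> cand j * (W0 * g (num_cand j C S 0) + (\<Sum>k\<in>Rset P T. if k < j then w k * g (num_cand j C S k) else 0))"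
    if "j \<in> {1..T}" for j
  proof -
    have "lvl P j \<le> (ta - la) * (W0 * g (num_cand j C S 0)
        + (\<Sum>k\<in>Rset P T. if k < j then w k * g (num_cand j C S k) else 0))"
      using that lvl_eq_lvl_fun[of j P] wsum_rej_before_eq[of j T P]
      unfolding lvl_fun_eq w_def C_def[abs_def] S_def[abs_def] by simp
    then show ?thesis
      using la_less_ta by (auto simp: cand_def pos_divide_le_eq mult.commute)
  qed
  have "(\<Sum>j = 1..T. lvl P j * cand j / (ta - la))
      \<le> (\<Sum>j = 1..T. cand j * (W0 * g (num_cand j C S 0)
          + (\<Sum>k\<in>Rset P T. if k < j then w k * g (num_cand j C S k) else 0)))"
    using term_le by (intro sum_mono) auto
  also have "\<dots> = W0 * B 0 + (\<Sum>k\<in>Rset P T. w k * B k)"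
  proof -
    have "cand j * (W0 * g (num_cand j C S 0)
          + (\<Sum>k\<in>Rset P T. if k < j then w k * g (num_cand j C S k) else 0))
        = W0 * (if S j \<and> \<not> C j \<and> 0 < j then g (num_cand j C S 0) else 0)
          + (\<Sum>k\<in>Rset P T. w k * (if S j \<and> \<not> C j \<and> k < j then g (num_cand j C S k) else 0))"
      if "j \<in> {1..T}" for j
      using that unfolding cand_def by (auto simp: sum_distrib_left intro!: sum.cong)
    then show ?thesis
      unfolding B_def by (simp add: sum.distrib sum_distrib_left sum.swap[of _ _ "Rset P T"])
  qed
  also have "\<dots> \<le> W0 * 1 + (\<Sum>k\<in>Rset P T. w k * 1)"
    using B_le w_nonneg W0_nonneg
    by (intro add_mono mult_left_mono sum_mono) auto
  also have "\<dots> \<le> a * real (max (card (Rset P T)) 1)"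
    using rej_weights_le[OF finite_Rset] unfolding w_def by simp
  finally show ?thesis unfolding cand_eq .
qed

lemma FDP_hat_le: "addis_FDP_hat a ta la W0 g P T \<le> a"
  unfolding addis_FDP_hat_def using fdp_numerator_le[where P=P and T=T] by (simp add: divide_le_eq)

subsection \<open>Measurability\<close>

text \<open>The past before time t is encoded by the finite set of codes (k, i), k \<in> {0, 1, 2} and
  1 \<le> i < t, whose indicator R_i, C_i or S_i (according to k) is true; the level at time t
  is a function of this set, which gives measurability without any topology on the past.\<close>
definition past_bit :: "(nat \<Rightarrow> real) \<Rightarrow> nat \<times> nat \<Rightarrow> bool" where
  "past_bit P x = (if fst x = 0 then rej P (snd x)
                   else if fst x = 1 then P (snd x) \<le> la else P (snd x) \<le> ta)"

definition past_codes :: "nat \<Rightarrow> (nat \<times> nat) set" where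
  "past_codes t = {0, 1, 2} \<times> {1..<t}"

definition lvl_of_past :: "nat \<Rightarrow> (nat \<times> nat) set \<Rightarrow> real" where
  "lvl_of_past t A = lvl_fun t (\<lambda>i. (0, i) \<in> A) (\<lambda>i. (1, i) \<in> A) (\<lambda>i. (2, i) \<in> A)"

lemma finite_past_codes: "finite (past_codes t)"
  unfolding past_codes_def by simp

lemma lvl_eq_lvl_of_past: "1 \<le> t \<Longrightarrow> lvl P t = lvl_of_past t {x\<in>past_codes t. past_bit P x}"
  unfolding lvl_of_past_def lvl_eq_lvl_fun
  by (intro lvl_fun_cong) (auto simp: past_codes_def past_bit_def)

lemma lvl_of_past_nonneg: "0 \<le> lvl_of_past t A"
  unfolding lvl_of_past_def by (rule lvl_fun_nonneg)

lemma lvl_of_past_le_la: "lvl_of_past t A \<le> la"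
  unfolding lvl_of_past_def lvl_fun_def by simp

lemma lvl_0_eq: "lvl P 0 = lvl P' 0"
  unfolding addis_alpha_def by (intro arg_cong2[where f=min] refl hat_cong_past) auto

lemma sets_Collect_rej:
  assumes Q: "\<And>i. Q i \<in> borel_measurable N"
  shows "{\<omega>\<in>space N. rej (\<lambda>i. Q i \<omega>) n} \<in> sets N"
proof (induction n rule: less_induct)
  case (less n)
  show ?case
  proof (cases "n = 0")
    case True
    have "{\<omega>\<in>space N. rej (\<lambda>i. Q i \<omega>) n} = {\<omega>\<in>space N. Q 0 \<omega> \<le> lvl (\<lambda>_. 0) 0}"
      unfolding True addis_rej_def using lvl_0_eq by metis
    also have "\<dots> \<in> sets N" using Q by measurable
    finally show ?thesis .
  next
    case False
    have "{\<omega>\<in>space N. past_bit (\<lambda>i. Q i \<omega>) x} \<in> sets N" if "x \<in> past_codes n" for x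
    proof (cases "fst x = 0")
      case True
      have "snd x < n" using that unfolding past_codes_def by auto
      then show ?thesis using less.IH True by (simp add: past_bit_def)
    next
      case False
      then show ?thesis using Q by (simp add: past_bit_def) measurable
    qed
    then have "(\<lambda>\<omega>. lvl_of_past n {x\<in>past_codes n. past_bit (\<lambda>i. Q i \<omega>) x}) \<in> borel_measurable N"
      by (intro measurable_pattern finite_past_codes) auto
    then have "{\<omega>\<in>space N. Q n \<omega> \<le> lvl_of_past n {x\<in>past_codes n. past_bit (\<lambda>i. Q i \<omega>) x}} \<in> sets N"
      using Q by measurable
    then show ?thesis
      using False by (simp add: addis_rej_def lvl_eq_lvl_of_past)
  qed
qed

lemma sets_Collect_past_bit:
  assumes "\<And>i. Q i \<in> borel_measurable N"
  shows "{\<omega>\<in>space N. past_bit (\<lambda>i. Q i \<omega>) x} \<in> sets N"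
proof (cases "fst x = 0")
  case True
  then show ?thesis using sets_Collect_rej[OF assms] by (simp add: past_bit_def)
next
  case False
  then show ?thesis using assms by (simp add: past_bit_def) measurable
qed

lemma measurable_past_pattern:
  assumes "\<And>i. Q i \<in> borel_measurable N" "finite I" "\<And>A. h A \<in> space M'"
  shows "(\<lambda>\<omega>. h {x\<in>I. past_bit (\<lambda>i. Q i \<omega>) x}) \<in> measurable N M'"
  using assms sets_Collect_past_bit[OF assms(1)] by (intro measurable_pattern) auto

lemma lvl_measurable:
  assumes "\<And>i. Q i \<in> borel_measurable N"
  shows "(\<lambda>\<omega>. lvl (\<lambda>i. Q i \<omega>) t) \<in> borel_measurable N"
proof (cases "t = 0")
  case True
  then have "(\<lambda>\<omega>. lvl (\<lambda>i. Q i \<omega>) t) = (\<lambda>_. lvl (\<lambda>_. 0) 0)" using lvl_0_eq by metis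
  then show ?thesis by simp
next
  case False
  then have "(\<lambda>\<omega>. lvl (\<lambda>i. Q i \<omega>) t) = (\<lambda>\<omega>. lvl_of_past t {x\<in>past_codes t. past_bit (\<lambda>i. Q i \<omega>) x})"
    by (simp add: lvl_eq_lvl_of_past)
  then show ?thesis using assms finite_past_codes by (simp add: measurable_past_pattern)
qed

lemma Rset_eq_past_bits: "Rset P T = snd ` {x\<in>{0} \<times> {1..T}. past_bit P x}"
  unfolding addis_Rset_def past_bit_def by force

lemma Rset_measurable:
  assumes "\<And>i. Q i \<in> borel_measurable N"
  shows "(\<lambda>\<omega>. h (Rset (\<lambda>i. Q i \<omega>) T)) \<in> borel_measurable N"
  unfolding Rset_eq_past_bits using assms by (intro measurable_past_pattern) auto

subsection \<open>Changing one p-value\<close>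

lemma hist_cong_prefix: "\<forall>i\<in>{1..s}. P i = P' i \<Longrightarrow> hist P s = hist P' s"
proof (induction s)
  case (Suc s)
  then have hist: "hist P s = hist P' s" by auto
  have "hat (Suc s) (hist P s) (\<lambda>i. P i \<le> la) (\<lambda>i. P i \<le> ta)
      = hat (Suc s) (hist P' s) (\<lambda>i. P' i \<le> la) (\<lambda>i. P' i \<le> ta)"
    using Suc.prems hist by (intro hat_cong_past) auto
  then show ?case using Suc.prems hist by simp
qed simp

lemma lvl_cong_prefix: "\<forall>k\<in>{1..<t}. P k = P' k \<Longrightarrow> lvl P t = lvl P' t"
proof -
  assume agree: "\<forall>k\<in>{1..<t}. P k = P' k"
  then have "hist P (t - 1) = hist P' (t - 1)" by (intro hist_cong_prefix) auto
  then show ?thesis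
    unfolding addis_alpha_def using agree by (intro arg_cong2[where f=min] refl hat_cong_past) auto
qed

lemma rej_cong_except:
  assumes "\<And>i. 1 \<le> i \<Longrightarrow> i \<noteq> j \<Longrightarrow> P i = P' i"
    "(P j \<le> la) = (P' j \<le> la)" "(P j \<le> ta) = (P' j \<le> ta)" "1 \<le> j \<Longrightarrow> rej P j = rej P' j"
  shows "1 \<le> n \<Longrightarrow> rej P n = rej P' n"
proof -
  have "hist P s = hist P' s" for s
  proof (induction s)
    case (Suc s)
    have "rej P (Suc s) = rej P' (Suc s)"
    proof (cases "Suc s = j")
      case False
      have "hat (Suc s) (hist P s) (\<lambda>i. P i \<le> la) (\<lambda>i. P i \<le> ta)
          = hat (Suc s) (hist P' s) (\<lambda>i. P' i \<le> la) (\<lambda>i. P' i \<le> ta)"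
        using assms Suc.IH by (intro hat_cong_past) (metis atLeastLessThan_iff)
      then show ?thesis
        using False assms(1)[of "Suc s"] by (simp add: addis_rej_def addis_alpha_def)
    qed (use assms in auto)
    then show ?case using Suc.IH by (simp only: hist_Suc)
  qed simp
  then show "1 \<le> n \<Longrightarrow> rej P n = rej P' n" by (simp add: rej_eq_hist)
qed

lemma rej_mono_except:
  assumes "\<And>i. 1 \<le> i \<Longrightarrow> i \<noteq> j \<Longrightarrow> P i = P' i"
    "P j \<le> la \<Longrightarrow> P' j \<le> la" "P' j \<le> ta \<Longrightarrow> P j \<le> ta" "1 \<le> j \<Longrightarrow> rej P j \<Longrightarrow> rej P' j"
  shows "1 \<le> n \<Longrightarrow> rej P n \<Longrightarrow> rej P' n"
proof (induction n rule: less_induct)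
  case (less n)
  show ?case
  proof (cases "n = j")
    case False
    have "lvl_fun n (rej P) (\<lambda>i. P i \<le> la) (\<lambda>i. P i \<le> ta)
        \<le> lvl_fun n (rej P') (\<lambda>i. P' i \<le> la) (\<lambda>i. P' i \<le> ta)"
      using less.IH assms by (intro lvl_fun_mono) (metis atLeastLessThan_iff order.refl)
    then show ?thesis
      using less.prems False assms(1)[of n] by (simp add: addis_rej_def lvl_eq_lvl_fun)
  qed (use less assms in auto)
qed

lemma Rset_zero_rejected:
  assumes j: "1 \<le> j" "rej P j" and others: "\<And>i. 1 \<le> i \<Longrightarrow> i \<noteq> j \<Longrightarrow> P i = P' i"
    and zero: "P' j = 0"
  shows "Rset P' T = Rset P T"
proof -
  have "P j \<le> la" using j lvl_le_la[of P j] by (simp add: addis_rej_def)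
  moreover have "rej P' j" using j zero lvl_nonneg[of j P'] by (simp add: addis_rej_def)
  ultimately have "rej P n = rej P' n" if "1 \<le> n" for n
    using la_nonneg la_less_ta zero j(2)
    by (intro rej_cong_except[OF others _ _ _ that]) auto
  then show ?thesis unfolding addis_Rset_def by auto
qed

lemma Rset_raise_candidate:
  assumes cand: "la < P j" "P j \<le> ta" and others: "\<And>i. 1 \<le> i \<Longrightarrow> i \<noteq> j \<Longrightarrow> P i = P' i"
    and raise: "P' j = ta"
  shows "Rset P' T = Rset P T"
proof -
  have "\<not> rej P j" "\<not> rej P' j"
    using cand raise lvl_le_la[of P j] lvl_le_la[of P' j] la_less_ta by (auto simp: addis_rej_def)
  then have "rej P n = rej P' n" if "1 \<le> n" for n
    using cand raise la_less_ta by (intro rej_cong_except[OF others _ _ _ that]) auto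
  then show ?thesis unfolding addis_Rset_def by auto
qed

lemma Rset_raise_subset_zero:
  assumes j: "1 \<le> j" and others: "\<And>i. 1 \<le> i \<Longrightarrow> i \<noteq> j \<Longrightarrow> P' i = P i"
    and zero: "P j = 0" and raise: "P' j = ta"
  shows "Rset P' T \<subseteq> Rset P T"
proof -
  have "rej P j" using j zero lvl_nonneg[of j P] by (simp add: addis_rej_def)
  then have "rej P n" if "1 \<le> n" "rej P' n" for n
    using zero raise la_less_ta by (intro rej_mono_except[OF others _ _ _ that]) auto
  then show ?thesis unfolding addis_Rset_def by auto
qed

end

subsection \<open>Conditional conservativeness\<close>

lemma le_mult_of_le_mult_above:
  fixes c m y :: real
  assumes "c < 1" "0 \<le> m" "\<And>x. c < x \<Longrightarrow> x < 1 \<Longrightarrow> y \<le> x * m"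
  shows "y \<le> c * m"
proof (cases "m = 0")
  case True
  then show ?thesis using assms(1) assms(3)[of "(c + 1) / 2"] by simp
next
  case False
  then have m: "0 < m" using assms(2) by simp
  have "y / m \<le> c"
  proof (rule dense_ge_bounded[OF assms(1)])
    fix w assume "c < w" "w < 1"
    then show "y / m \<le> w" using assms(3) m by (simp add: divide_le_eq)
  qed
  then show ?thesis using m by (simp add: divide_le_eq mult.commute)
qed

lemma measurable_sigma_of_vimages:
  assumes "{f -` B \<inter> space M | B. B \<in> sets borel} \<subseteq> G" "G \<subseteq> Pow (space M)"
  shows "f \<in> measurable (sigma (space M) G) (borel :: real measure)"
proof (rule measurableI)
  fix B :: "real set" assume "B \<in> sets borel"
  then have "f -` B \<inter> space M \<in> G" using assms by blast
  then show "f -` B \<inter> space (sigma (space M) G) \<in> sets (sigma (space M) G)"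
    using assms by (simp add: sets_measure_of space_measure_of_conv)
qed simp

context prob_space
begin

lemma integrable_bounded:
  fixes f :: "'a \<Rightarrow> real"
  assumes "f \<in> borel_measurable M" "\<And>\<omega>. \<omega> \<in> space M \<Longrightarrow> \<bar>f \<omega>\<bar> \<le> B"
  shows "integrable M f"
  using assms by (intro integrable_const_bound[where B=B]) auto

lemma integrable_indicator_event: "A \<in> events \<Longrightarrow> integrable M (indicator A :: 'a \<Rightarrow> real)"
  by (rule integrable_real_indicator) (auto simp: less_top[symmetric])

lemma integral_divide_antimono:
  fixes f D D' :: "'a \<Rightarrow> real"
  assumes f: "f \<in> borel_measurable M" "\<And>\<omega>. 0 \<le> f \<omega>" "\<And>\<omega>. f \<omega> \<le> B"
    and D: "D \<in> borel_measurable M" "D' \<in> borel_measurable M" "\<And>\<omega>. 1 \<le> D' \<omega>" "\<And>\<omega>. D' \<omega> \<le> D \<omega>"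
  shows "(\<integral>\<omega>. f \<omega> / D \<omega> \<partial>M) \<le> (\<integral>\<omega>. f \<omega> / D' \<omega> \<partial>M)"
proof (rule integral_mono)
  have bound: "\<bar>f \<omega> / E \<omega>\<bar> \<le> B" if "\<And>\<omega>. 1 \<le> E \<omega>" for E \<omega>
  proof -
    have "f \<omega> / E \<omega> \<le> f \<omega> / 1" using f that[of \<omega>] by (intro divide_left_mono) auto
    moreover have "0 \<le> f \<omega> / E \<omega>" using f(2)[of \<omega>] that[of \<omega>] by simp
    ultimately show ?thesis using f(3)[of \<omega>] by simp
  qed
  show "integrable M (\<lambda>\<omega>. f \<omega> / D \<omega>)" "integrable M (\<lambda>\<omega>. f \<omega> / D' \<omega>)"
    using f D bound[of D] bound[of D'] order.trans[OF D(3,4)] by (auto intro!: integrable_bounded)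
  show "f \<omega> / D \<omega> \<le> f \<omega> / D' \<omega>" for \<omega>
    using f D(3,4)[of \<omega>] by (intro divide_left_mono) auto
qed

lemma integral_mult_indep:
  fixes X Y :: "'a \<Rightarrow> real"
  assumes indep: "indep_set (sigma_sets (space M) G1) (sigma_sets (space M) G2)"
    and G: "G1 \<subseteq> Pow (space M)" "G2 \<subseteq> Pow (space M)"
    and X: "X \<in> measurable (sigma (space M) G1) borel" "X \<in> borel_measurable M"
      "\<And>\<omega>. \<omega> \<in> space M \<Longrightarrow> \<bar>X \<omega>\<bar> \<le> BX"
    and Y: "Y \<in> measurable (sigma (space M) G2) borel" "Y \<in> borel_measurable M"
      "\<And>\<omega>. \<omega> \<in> space M \<Longrightarrow> \<bar>Y \<omega>\<bar> \<le> BY"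
  shows "(\<integral>\<omega>. X \<omega> * Y \<omega> \<partial>M) = (\<integral>\<omega>. X \<omega> \<partial>M) * (\<integral>\<omega>. Y \<omega> \<partial>M)"
proof (rule indep_var_lebesgue_integral)
  have vimages: "sigma_sets (space M) {Z -` A \<inter> space M | A. A \<in> sets borel} \<subseteq> sigma_sets (space M) G"
    if "Z \<in> measurable (sigma (space M) G) (borel :: real measure)" "G \<subseteq> Pow (space M)" for Z G
  proof (rule sigma_sets_mono, safe)
    fix A :: "real set" assume "A \<in> sets borel"
    then have "Z -` A \<inter> space (sigma (space M) G) \<in> sets (sigma (space M) G)"
      by (rule measurable_sets[OF that(1)])
    then show "Z -` A \<inter> space M \<in> sigma_sets (space M) G"
      using that(2) by (simp add: sets_measure_of space_measure_of_conv)
  qed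
  have "indep_set (sigma_sets (space M) {X -` A \<inter> space M | A. A \<in> sets borel})
      (sigma_sets (space M) {Y -` A \<inter> space M | A. A \<in> sets borel})"
    using indep unfolding indep_set_def
    by (rule indep_sets_mono_sets) (use vimages[OF X(1) G(1)] vimages[OF Y(1) G(2)] in \<open>auto split: bool.split\<close>)
  then show "indep_var borel X borel Y" using X Y by (simp add: indep_var_eq)
  show "integrable M X" using X by (intro integrable_bounded) auto
  show "integrable M Y" using Y by (intro integrable_bounded) auto
qed

end

locale addis_pvalues = addis_params + prob_space +
  fixes Pv :: "nat \<Rightarrow> 'a \<Rightarrow> real"
  assumes Pv_measurable: "\<And>j. Pv j \<in> borel_measurable M"
    and ta_le_1: "ta \<le> 1"
begin

abbreviation cond_conservative_on :: "'a set \<Rightarrow> nat \<Rightarrow> bool" where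
  "cond_conservative_on E j \<equiv> (\<forall>x\<in>{0<..<1}. \<forall>\<tau>'\<in>{0<..<1}.
     measure M ({\<omega> \<in> space M. Pv j \<omega> / \<tau>' \<le> x \<and> Pv j \<omega> \<le> \<tau>'} \<inter> E)
       \<le> x * measure M ({\<omega> \<in> space M. Pv j \<omega> \<le> \<tau>'} \<inter> E))"

lemma sets_Collect_Pv_le[measurable]: "{\<omega>\<in>space M. Pv j \<omega> \<le> c} \<in> sets M"
  using Pv_measurable by measurable

lemma prob_le_ratio:
  assumes cuc: "cond_conservative_on E j" and E: "E \<in> sets M" and u: "0 \<le> u" "u < ta"
  shows "measure M ({\<omega>\<in>space M. Pv j \<omega> \<le> u} \<inter> E)
    \<le> (u / ta) * measure M ({\<omega>\<in>space M. Pv j \<omega> \<le> ta} \<inter> E)"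
proof (rule le_mult_of_le_mult_above)
  show "u / ta < 1" using u ta_pos by simp
  fix x assume x: "u / ta < x" "x < 1"
  have "0 \<le> u / ta" using u ta_pos by simp
  then have "0 < x" using x by linarith
  then have "u / x < ta" using x ta_pos by (simp add: field_simps)
  then obtain \<tau> where \<tau>: "u / x < \<tau>" "\<tau> < ta" using dense by blast
  have "0 \<le> u / x" using u \<open>0 < x\<close> by simp
  then have \<tau>01: "0 < \<tau>" "\<tau> < 1" using \<tau> ta_le_1 by auto
  have "u < x * \<tau>" using \<tau>(1) \<open>0 < x\<close> by (simp add: divide_less_eq mult.commute)
  moreover have "x * \<tau> \<le> \<tau>" using x \<tau>01 by simp
  ultimately have "u < x * \<tau>" "u < \<tau>" by auto
  then have "{\<omega>\<in>space M. Pv j \<omega> \<le> u} \<inter> E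
      \<subseteq> {\<omega> \<in> space M. Pv j \<omega> / \<tau> \<le> x \<and> Pv j \<omega> \<le> \<tau>} \<inter> E"
    using \<tau>01 by (auto simp: divide_le_eq)
  moreover have "{\<omega> \<in> space M. Pv j \<omega> / \<tau> \<le> x \<and> Pv j \<omega> \<le> \<tau>} \<inter> E \<in> sets M"
    using E Pv_measurable by measurable
  ultimately have "measure M ({\<omega>\<in>space M. Pv j \<omega> \<le> u} \<inter> E)
      \<le> measure M ({\<omega> \<in> space M. Pv j \<omega> / \<tau> \<le> x \<and> Pv j \<omega> \<le> \<tau>} \<inter> E)"
    by (rule finite_measure_mono)
  also have "\<dots> \<le> x * measure M ({\<omega>\<in>space M. Pv j \<omega> \<le> \<tau>} \<inter> E)"
    using cuc \<open>0 < x\<close> x \<tau>01 by auto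
  also have "\<dots> \<le> x * measure M ({\<omega>\<in>space M. Pv j \<omega> \<le> ta} \<inter> E)"
    using \<open>0 < x\<close> \<tau> E by (intro mult_left_mono finite_measure_mono) auto
  finally show "measure M ({\<omega>\<in>space M. Pv j \<omega> \<le> u} \<inter> E)
      \<le> x * measure M ({\<omega>\<in>space M. Pv j \<omega> \<le> ta} \<inter> E)" .
qed simp

lemma prob_le_cand:
  assumes cuc: "cond_conservative_on E j" and E: "E \<in> sets M" and v: "0 \<le> v" "v \<le> la"
  shows "measure M ({\<omega>\<in>space M. Pv j \<omega> \<le> v} \<inter> E)
    \<le> v / (ta - la) * measure M ({\<omega>\<in>space M. la < Pv j \<omega> \<and> Pv j \<omega> \<le> ta} \<inter> E)"
proof -
  define mt where "mt = measure M ({\<omega>\<in>space M. Pv j \<omega> \<le> ta} \<inter> E)"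
  define ml where "ml = measure M ({\<omega>\<in>space M. Pv j \<omega> \<le> la} \<inter> E)"
  have v_le: "measure M ({\<omega>\<in>space M. Pv j \<omega> \<le> v} \<inter> E) \<le> (v / ta) * mt"
    unfolding mt_def using prob_le_ratio[OF cuc E v(1)] v la_less_ta by simp
  have la_le: "ml \<le> (la / ta) * mt"
    unfolding ml_def mt_def using prob_le_ratio[OF cuc E la_nonneg la_less_ta] .
  have "{\<omega>\<in>space M. la < Pv j \<omega> \<and> Pv j \<omega> \<le> ta} \<inter> E
      = ({\<omega>\<in>space M. Pv j \<omega> \<le> ta} \<inter> E) - ({\<omega>\<in>space M. Pv j \<omega> \<le> la} \<inter> E)" by auto
  then have cand: "measure M ({\<omega>\<in>space M. la < Pv j \<omega> \<and> Pv j \<omega> \<le> ta} \<inter> E) = mt - ml"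
    unfolding mt_def ml_def using E la_less_ta by (simp add: finite_measure_Diff subset_eq)
  have "v / ta * mt = v / (ta - la) * (mt - (la / ta) * mt)"
    using la_less_ta ta_pos by (simp add: field_simps)
  also have "\<dots> \<le> v / (ta - la) * (mt - ml)"
    using la_le v la_less_ta by (intro mult_left_mono) auto
  finally show ?thesis using v_le cand by simp
qed

lemma past_pattern_in_past_sets:
  "{\<omega>\<in>space M. {x\<in>past_codes j. past_bit (\<lambda>i. Pv i \<omega>) x} = A} \<in> addis_past_sets M a ta la W0 g Pv j"
proof -
  define G where "G = (\<Union>i\<in>{1..<j}. {{\<omega> \<in> space M. rej (\<lambda>j. Pv j \<omega>) i},
                      {\<omega> \<in> space M. Pv i \<omega> \<le> la}, {\<omega> \<in> space M. Pv i \<omega> \<le> ta}})"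
  have "G \<subseteq> Pow (space M)" unfolding G_def by auto
  then have N: "sets (sigma (space M) G) = sigma_sets (space M) G" "space (sigma (space M) G) = space M"
    by (auto simp: sets_measure_of space_measure_of_conv)
  have "{\<omega>\<in>space M. past_bit (\<lambda>i. Pv i \<omega>) x} \<in> G" if "x \<in> past_codes j" for x
    using that unfolding G_def past_codes_def by (auto simp: past_bit_def)
  then have "{\<omega>\<in>space (sigma (space M) G). {x\<in>past_codes j. past_bit (\<lambda>i. Pv i \<omega>) x} = A}
      \<in> sets (sigma (space M) G)"
    by (intro sets_Collect_pattern_eq finite_past_codes) (auto simp: N intro: sigma_sets.Basic)
  then show ?thesis unfolding addis_past_sets_def G_def[symmetric] N .
qed

text \<open>On each event {past = A} of F^{j-1} the level is the constant lvl_of_past j A, so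
  conditional conservativeness applies event by event.\<close>
lemma prob_rej_le_fdp_term:
  assumes cuc: "\<forall>E\<in>addis_past_sets M a ta la W0 g Pv j. cond_conservative_on E j" and j: "1 \<le> j"
  shows "measure M {\<omega>\<in>space M. rej (\<lambda>i. Pv i \<omega>) j}
    \<le> (\<integral>\<omega>. lvl (\<lambda>i. Pv i \<omega>) j * (if la < Pv j \<omega> \<and> Pv j \<omega> \<le> ta then 1 else 0) / (ta - la) \<partial>M)"
proof -
  define I where "I = past_codes j"
  define Av where "Av \<omega> = {x\<in>I. past_bit (\<lambda>i. Pv i \<omega>) x}" for \<omega>
  define EA where "EA A = {\<omega>\<in>space M. Av \<omega> = A}" for A
  define Bv where "Bv v = {\<omega>\<in>space M. Pv j \<omega> \<le> v}" for v
  define L where "L = {\<omega>\<in>space M. la < Pv j \<omega> \<and> Pv j \<omega> \<le> ta}"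
  have finI: "finite I" unfolding I_def by (rule finite_past_codes)
  have EA: "EA A \<in> sets M" for A
    unfolding EA_def Av_def using sets_Collect_past_bit[OF Pv_measurable]
    by (intro sets_Collect_pattern_eq finI) auto
  have Bv: "Bv v \<in> sets M" for v unfolding Bv_def by simp
  have L: "L \<in> sets M" unfolding L_def using Pv_measurable by measurable
  have lvl: "lvl (\<lambda>i. Pv i \<omega>) j = lvl_of_past j (Av \<omega>)" for \<omega>
    unfolding Av_def I_def using lvl_eq_lvl_of_past[OF j] .
  have pattern_sum:
    "(\<Sum>A\<in>Pow I. f A * indicator (X A \<inter> EA A) \<omega>) = f (Av \<omega>) * indicator (X (Av \<omega>)) \<omega>"
    if "\<omega> \<in> space M" for f :: "_ \<Rightarrow> real" and X \<omega>
  proof -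
    have "(\<Sum>A\<in>Pow I. f A * indicator (X A \<inter> EA A) \<omega>)
        = (\<Sum>A\<in>Pow I. if Av \<omega> = A then f A * indicator (X A) \<omega> else 0)"
      using that by (intro sum.cong) (auto simp: EA_def indicator_def)
    also have "\<dots> = f (Av \<omega>) * indicator (X (Av \<omega>)) \<omega>" using finI by (simp add: sum.delta' Av_def)
    finally show ?thesis .
  qed
  have "measure M {\<omega>\<in>space M. rej (\<lambda>i. Pv i \<omega>) j}
      = (\<integral>\<omega>. indicator {\<omega>\<in>space M. rej (\<lambda>i. Pv i \<omega>) j} \<omega> \<partial>M)"
    by (simp add: Int_absorb2)
  also have "\<dots> = (\<integral>\<omega>. (\<Sum>A\<in>Pow I. indicator (Bv (lvl_of_past j A) \<inter> EA A) \<omega>) \<partial>M)"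
  proof (rule Bochner_Integration.integral_cong[OF refl])
    fix \<omega> assume \<omega>: "\<omega> \<in> space M"
    then have "indicator {\<omega>\<in>space M. rej (\<lambda>i. Pv i \<omega>) j} \<omega>
        = (indicator (Bv (lvl_of_past j (Av \<omega>))) \<omega> :: real)"
      by (simp add: Bv_def lvl addis_rej_def indicator_def)
    also have "\<dots> = (\<Sum>A\<in>Pow I. indicator (Bv (lvl_of_past j A) \<inter> EA A) \<omega>)"
      using pattern_sum[OF \<omega>, of "\<lambda>_. 1" "\<lambda>A. Bv (lvl_of_past j A)"] by simp
    finally show "indicator {\<omega>\<in>space M. rej (\<lambda>i. Pv i \<omega>) j} \<omega>
        = (\<Sum>A\<in>Pow I. indicator (Bv (lvl_of_past j A) \<inter> EA A) \<omega> :: real)" .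
  qed
  also have "\<dots> = (\<Sum>A\<in>Pow I. measure M (Bv (lvl_of_past j A) \<inter> EA A))"
    using Bv EA by (subst Bochner_Integration.integral_sum) (auto intro!: integrable_indicator_event)
  also have "\<dots> \<le> (\<Sum>A\<in>Pow I. lvl_of_past j A / (ta - la) * measure M (L \<inter> EA A))"
    unfolding Bv_def L_def
    using prob_le_cand[OF _ EA lvl_of_past_nonneg lvl_of_past_le_la] cuc past_pattern_in_past_sets
    by (intro sum_mono) (auto simp: EA_def Av_def I_def)
  also have "\<dots> = (\<integral>\<omega>. (\<Sum>A\<in>Pow I. lvl_of_past j A / (ta - la) * indicator (L \<inter> EA A) \<omega>) \<partial>M)"
    using L EA by (subst Bochner_Integration.integral_sum)
      (auto intro!: integrable_indicator_event integrable_mult_right)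
  also have "\<dots> = (\<integral>\<omega>. lvl (\<lambda>i. Pv i \<omega>) j * (if la < Pv j \<omega> \<and> Pv j \<omega> \<le> ta then 1 else 0) / (ta - la) \<partial>M)"
  proof (rule Bochner_Integration.integral_cong[OF refl])
    fix \<omega> assume "\<omega> \<in> space M"
    then show "(\<Sum>A\<in>Pow I. lvl_of_past j A / (ta - la) * indicator (L \<inter> EA A) \<omega>)
        = lvl (\<lambda>i. Pv i \<omega>) j * (if la < Pv j \<omega> \<and> Pv j \<omega> \<le> ta then 1 else 0) / (ta - la)"
      unfolding pattern_sum[OF \<open>\<omega> \<in> space M\<close>] by (auto simp: L_def lvl indicator_def)
  qed
  finally show ?thesis .
qed

subsection \<open>Independence and the FDR\<close>

definition fdp_denom :: "nat \<Rightarrow> (nat \<Rightarrow> real) \<Rightarrow> real" where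
  "fdp_denom T P = real (max (card (Rset P T)) 1)"

lemma fdp_denom_ge_1: "1 \<le> fdp_denom T P"
  unfolding fdp_denom_def by simp

lemma fdp_denom_le: "fdp_denom T P \<le> real T + 1"
proof -
  have "card (Rset P T) \<le> card {1..T}" unfolding addis_Rset_def by (intro card_mono) auto
  then show ?thesis unfolding fdp_denom_def by simp
qed

lemma fdp_denom_measurable:
  "(\<And>i. Q i \<in> borel_measurable N) \<Longrightarrow> (\<lambda>\<omega>. fdp_denom T (\<lambda>i. Q i \<omega>)) \<in> borel_measurable N"
  unfolding fdp_denom_def by (rule Rset_measurable)

definition pval_gen :: "nat \<Rightarrow> 'a set set" where
  "pval_gen i = {Pv i -` B \<inter> space M | B. B \<in> sets borel}"

definition others_gen :: "nat \<Rightarrow> 'a set set" where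
  "others_gen j = (\<Union>i\<in>{i. 1 \<le> i \<and> i \<noteq> j}. pval_gen i)"

lemma measurable_zeroed_others:
  "(\<lambda>\<omega>. if i = j \<or> i = 0 then 0 else Pv i \<omega>) \<in> borel_measurable (sigma (space M) (others_gen j))"
proof (cases "i = j \<or> i = 0")
  case False
  then have "i \<in> {i. 1 \<le> i \<and> i \<noteq> j}" by auto
  then have "pval_gen i \<subseteq> others_gen j" unfolding others_gen_def by blast
  then have "Pv i \<in> borel_measurable (sigma (space M) (others_gen j))"
    by (intro measurable_sigma_of_vimages) (auto simp: others_gen_def pval_gen_def)
  then show ?thesis using False by simp
qed simp

lemma indep_pval_others:
  assumes ni: "nulls_independent M Pv H0" and j: "j \<in> H0"
  shows "indep_set (sigma_sets (space M) (pval_gen j)) (sigma_sets (space M) (others_gen j))"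
proof -
  define F where "F = (\<lambda>k. case k of
              Some t \<Rightarrow> sets (vimage_algebra (space M) (Pv t) borel)
            | None \<Rightarrow> sigma_sets (space M)
                 (\<Union>j\<in>{j. 1 \<le> j \<and> j \<notin> H0}. sets (vimage_algebra (space M) (Pv j) borel)))"
  define K where "K b = (if b then {Some j} else insert None (Some ` (H0 - {j})))" for b
  have vimage: "sets (vimage_algebra (space M) (Pv t) borel) = pval_gen t" for t
    unfolding pval_gen_def by (rule sets_vimage_algebra2) simp
  have "indep_sets (\<lambda>b. sigma_sets (space M) (\<Union>i\<in>K b. F i)) UNIV"
  proof (rule indep_sets_collect_sigma)
    have "(\<Union>b\<in>UNIV. K b) = insert None (Some ` H0)" using j unfolding K_def by (auto simp: UNIV_bool)
    then show "indep_sets F (\<Union>b\<in>UNIV. K b)" using ni unfolding nulls_independent_def F_def by simp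
  next
    fix i b assume "i \<in> K b"
    show "Int_stable (F i)"
    proof (cases i)
      case None
      have "sigma_algebra (space M) (F i)" unfolding None F_def option.case
        by (rule sigma_algebra_sigma_sets) (auto simp: vimage pval_gen_def)
      then interpret sigma_algebra "space M" "F i" .
      show ?thesis by (rule Int_stable)
    qed (simp add: F_def sets.Int_stable)
  next
    show "disjoint_family_on K UNIV" unfolding disjoint_family_on_def K_def by auto
  qed
  then have indep: "indep_set (sigma_sets (space M) (\<Union>i\<in>K True. F i)) (sigma_sets (space M) (\<Union>i\<in>K False. F i))"
    unfolding indep_set_def by (rule indep_sets_mono_sets) (auto split: bool.split)
  have own: "sigma_sets (space M) (pval_gen j) \<subseteq> sigma_sets (space M) (\<Union>i\<in>K True. F i)"
    by (rule sigma_sets_subseteq) (simp add: K_def F_def vimage)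
  have others: "sigma_sets (space M) (others_gen j) \<subseteq> sigma_sets (space M) (\<Union>i\<in>K False. F i)"
  proof (rule sigma_sets_mono, unfold others_gen_def, safe)
    fix x i assume i: "1 \<le> i" "i \<noteq> j" and x: "x \<in> pval_gen i"
    show "x \<in> sigma_sets (space M) (\<Union>i\<in>K False. F i)"
    proof (cases "i \<in> H0")
      case True
      then have "x \<in> F (Some i)" "Some i \<in> K False" using x i unfolding F_def K_def vimage by auto
      then show ?thesis by blast
    next
      case False
      then have "x \<in> F None" "None \<in> K False" using x i unfolding F_def K_def vimage by auto
      then show ?thesis by blast
    qed
  qed
  show ?thesis
    using indep unfolding indep_set_def
    by (rule indep_sets_mono_sets) (use own others in \<open>auto split: bool.split\<close>)
qed

lemma expected_indep_cross_le:
  assumes cuc: "cond_conservative_on (space M) j"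
    and indep: "indep_set (sigma_sets (space M) (pval_gen j)) (sigma_sets (space M) (others_gen j))"
    and Y: "Y \<in> borel_measurable (sigma (space M) (others_gen j))" "Y \<in> borel_measurable M"
      "\<And>\<omega>. 0 \<le> Y \<omega>" "\<And>\<omega>. Y \<omega> \<le> 1"
    and v: "0 \<le> v" "v \<le> la"
  shows "(\<integral>\<omega>. indicator {..v} (Pv j \<omega>) * Y \<omega> \<partial>M)
    \<le> v / (ta - la) * (\<integral>\<omega>. indicator {la<..ta} (Pv j \<omega>) * Y \<omega> \<partial>M)"
proof -
  have gens: "pval_gen j \<subseteq> Pow (space M)" "others_gen j \<subseteq> Pow (space M)"
    unfolding pval_gen_def others_gen_def by auto
  have Pv_pval: "Pv j \<in> borel_measurable (sigma (space M) (pval_gen j))"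
    using gens by (intro measurable_sigma_of_vimages) (auto simp: pval_gen_def)
  have product: "(\<integral>\<omega>. indicator B (Pv j \<omega>) * Y \<omega> \<partial>M) = measure M (Pv j -` B \<inter> space M) * (\<integral>\<omega>. Y \<omega> \<partial>M)"
    if B: "B \<in> sets borel" for B :: "real set"
  proof -
    have "(\<integral>\<omega>. indicator B (Pv j \<omega>) * Y \<omega> \<partial>M) = (\<integral>\<omega>. indicator B (Pv j \<omega>) \<partial>M) * (\<integral>\<omega>. Y \<omega> \<partial>M)"
      using Y by (intro integral_mult_indep[OF indep gens, where BX=1 and BY=1]
          measurable_compose[OF Pv_pval borel_measurable_indicator[OF B]]
          measurable_compose[OF Pv_measurable borel_measurable_indicator[OF B]])
        (auto simp: indicator_def intro: abs_leI order.trans[OF _ zero_le_one])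
    also have "(\<integral>\<omega>. indicator B (Pv j \<omega>) \<partial>M) = (\<integral>\<omega>. indicator (Pv j -` B \<inter> space M) \<omega> \<partial>M)"
      by (intro Bochner_Integration.integral_cong) (auto simp: indicator_def)
    also have "\<dots> = measure M (Pv j -` B \<inter> space M)"
      using measurable_sets[OF Pv_measurable B] by simp
    finally show ?thesis .
  qed
  have "Pv j -` {..v} \<inter> space M = {\<omega>\<in>space M. Pv j \<omega> \<le> v} \<inter> space M"
    and "Pv j -` {la<..ta} \<inter> space M = {\<omega>\<in>space M. la < Pv j \<omega> \<and> Pv j \<omega> \<le> ta} \<inter> space M"
    by auto
  then have "measure M (Pv j -` {..v} \<inter> space M) \<le> v / (ta - la) * measure M (Pv j -` {la<..ta} \<inter> space M)"
    using prob_le_cand[OF cuc sets.top v] by simp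
  moreover have "0 \<le> (\<integral>\<omega>. Y \<omega> \<partial>M)" using Y by (intro Bochner_Integration.integral_nonneg) auto
  ultimately show ?thesis
    unfolding product[OF atMost_borel] product[OF greaterThanAtMost_borel]
    by (metis mult.assoc mult_right_mono)
qed

text \<open>Level and weight, being determined by the other p-values through the finite pattern Z, are
  independent of P_j, so the superuniformity of P_j applies pattern by pattern.\<close>
lemma expected_indep_level_le:
  assumes cuc: "cond_conservative_on (space M) j"
    and indep: "indep_set (sigma_sets (space M) (pval_gen j)) (sigma_sets (space M) (others_gen j))"
    and Z: "finite F" "\<And>\<omega>. Z \<omega> \<in> F"
    and h: "\<And>b. 0 \<le> h b" "\<And>b. h b \<le> la"
    and D: "\<And>\<omega>. 1 \<le> D \<omega>"
    and Y: "\<And>b. (\<lambda>\<omega>. (if Z \<omega> = b then 1 else 0) / D \<omega>) \<in> borel_measurable (sigma (space M) (others_gen j))"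
      "\<And>b. (\<lambda>\<omega>. (if Z \<omega> = b then 1 else 0) / D \<omega>) \<in> borel_measurable M"
  shows "(\<integral>\<omega>. indicator {..h (Z \<omega>)} (Pv j \<omega>) / D \<omega> \<partial>M)
    \<le> (\<integral>\<omega>. h (Z \<omega>) * indicator {la<..ta} (Pv j \<omega>) / (ta - la) / D \<omega> \<partial>M)"
proof -
  define Y where "Y b \<omega> = (if Z \<omega> = b then 1 else 0) / D \<omega>" for b \<omega>
  define K where "K \<omega> = (indicator {la<..ta} (Pv j \<omega>) :: real)" for \<omega>
  have Y_bounds: "0 \<le> Y b \<omega>" "Y b \<omega> \<le> 1" for b \<omega>
    unfolding Y_def using D[of \<omega>] by auto
  have integrable: "integrable M (\<lambda>\<omega>. indicator S (Pv j \<omega>) * Y b \<omega>)"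
    if S: "S \<in> sets borel" for S :: "real set" and b
  proof (rule integrable_bounded[where B=1])
    have "Y b \<in> borel_measurable M" unfolding Y_def[abs_def] using Y(2) by simp
    then show "(\<lambda>\<omega>. indicator S (Pv j \<omega>) * Y b \<omega>) \<in> borel_measurable M"
      by (intro borel_measurable_times measurable_compose[OF Pv_measurable borel_measurable_indicator[OF S]])
    show "\<bar>indicator S (Pv j \<omega>) * Y b \<omega>\<bar> \<le> 1" for \<omega>
      using Y_bounds[of b \<omega>] by (auto simp: indicator_def)
  qed
  have pattern_sum: "(\<Sum>b\<in>F. f b * Y b \<omega>) = f (Z \<omega>) / D \<omega>" for f :: "_ \<Rightarrow> real" and \<omega>
  proof -
    have "(\<Sum>b\<in>F. f b * Y b \<omega>) = (\<Sum>b\<in>F. if Z \<omega> = b then f b / D \<omega> else 0)"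
      unfolding Y_def by (intro sum.cong) auto
    also have "\<dots> = f (Z \<omega>) / D \<omega>" using Z by (simp add: sum.delta')
    finally show ?thesis .
  qed
  have "(\<integral>\<omega>. indicator {..h (Z \<omega>)} (Pv j \<omega>) / D \<omega> \<partial>M)
      = (\<integral>\<omega>. (\<Sum>b\<in>F. indicator {..h b} (Pv j \<omega>) * Y b \<omega>) \<partial>M)"
    unfolding pattern_sum ..
  also have "\<dots> = (\<Sum>b\<in>F. (\<integral>\<omega>. indicator {..h b} (Pv j \<omega>) * Y b \<omega> \<partial>M))"
    using integrable[OF atMost_borel] by (intro Bochner_Integration.integral_sum)
  also have "\<dots> \<le> (\<Sum>b\<in>F. h b / (ta - la) * (\<integral>\<omega>. K \<omega> * Y b \<omega> \<partial>M))"
    unfolding K_def Y_def using Y h D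
    by (intro sum_mono expected_indep_cross_le[OF cuc indep]) (auto simp: Y_def[symmetric] Y_bounds)
  also have "\<dots> = (\<integral>\<omega>. (\<Sum>b\<in>F. h b / (ta - la) * K \<omega> * Y b \<omega>) \<partial>M)"
    unfolding K_def using integrable[OF greaterThanAtMost_borel]
    by (subst Bochner_Integration.integral_sum) (auto simp: mult.assoc intro!: integrable_mult_right)
  also have "\<dots> = (\<integral>\<omega>. h (Z \<omega>) * indicator {la<..ta} (Pv j \<omega>) / (ta - la) / D \<omega> \<partial>M)"
    unfolding pattern_sum K_def by simp
  finally show ?thesis .
qed

text \<open>Zeroing P_j (Q0) makes the level and the rejection count functions of the other p-values
  without changing them on a rejection; raising a candidate P_j to ta (Q1) changes nothing
  either, and rejects no more than Q0. Index 0, never used by the algorithm, is zeroed too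
  because it is not among the other p-values.\<close>
lemma expected_rej_share_le:
  assumes j: "1 \<le> j" and cuc: "cond_conservative_on (space M) j"
    and indep: "indep_set (sigma_sets (space M) (pval_gen j)) (sigma_sets (space M) (others_gen j))"
  shows "(\<integral>\<omega>. (if rej (\<lambda>i. Pv i \<omega>) j then 1 else 0) / fdp_denom T (\<lambda>i. Pv i \<omega>) \<partial>M)
    \<le> (\<integral>\<omega>. lvl (\<lambda>i. Pv i \<omega>) j * (if la < Pv j \<omega> \<and> Pv j \<omega> \<le> ta then 1 else 0)
          / ((ta - la) * fdp_denom T (\<lambda>i. Pv i \<omega>)) \<partial>M)"
proof -
  define Q0 where "Q0 i \<omega> = (if i = j \<or> i = 0 then 0 else Pv i \<omega>)" for i \<omega>
  define Q1 where "Q1 i \<omega> = (if i = j then ta else if i = 0 then 0 else Pv i \<omega>)" for i \<omega>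
  define I where "I = past_codes j"
  define Z where "Z \<omega> = {x\<in>I. past_bit (\<lambda>i. Q0 i \<omega>) x}" for \<omega>
  define D0 where "D0 \<omega> = fdp_denom T (\<lambda>i. Q0 i \<omega>)" for \<omega>
  define D1 where "D1 \<omega> = fdp_denom T (\<lambda>i. Q1 i \<omega>)" for \<omega>
  define K where "K \<omega> = (indicator {la<..ta} (Pv j \<omega>) :: real)" for \<omega>
  define \<alpha> where "\<alpha> \<omega> = lvl (\<lambda>i. Pv i \<omega>) j" for \<omega>
  have Q0_M: "Q0 i \<in> borel_measurable M" and Q1_M: "Q1 i \<in> borel_measurable M" for i
    unfolding Q0_def[abs_def] Q1_def[abs_def] using Pv_measurable by simp_all
  have Q0_others: "Q0 i \<in> borel_measurable (sigma (space M) (others_gen j))" for i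
    unfolding Q0_def[abs_def] by (rule measurable_zeroed_others)
  have Y_pattern: "(if Z \<omega> = A then 1 else 0) / D0 \<omega>
      = (\<lambda>B. (if B \<inter> I = A then 1 else 0) / real (max (card (snd ` (B \<inter> {0} \<times> {1..T}))) 1))
          {x \<in> I \<union> {0} \<times> {1..T}. past_bit (\<lambda>i. Q0 i \<omega>) x}" for A \<omega>
  proof -
    have "{x \<in> I \<union> {0} \<times> {1..T}. past_bit (\<lambda>i. Q0 i \<omega>) x} \<inter> I = Z \<omega>"
      and "{x \<in> I \<union> {0} \<times> {1..T}. past_bit (\<lambda>i. Q0 i \<omega>) x} \<inter> {0} \<times> {1..T}
        = {x \<in> {0} \<times> {1..T}. past_bit (\<lambda>i. Q0 i \<omega>) x}"
      unfolding Z_def by auto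
    then show ?thesis unfolding D0_def fdp_denom_def Rset_eq_past_bits by simp
  qed
  have D0_ge: "1 \<le> D0 \<omega>" and D1_ge: "1 \<le> D1 \<omega>" for \<omega>
    unfolding D0_def D1_def by (simp_all add: fdp_denom_ge_1)
  have \<alpha>_past: "\<alpha> \<omega> = lvl_of_past j (Z \<omega>)" for \<omega>
    unfolding \<alpha>_def Z_def I_def
    by (subst lvl_cong_prefix[where P'="\<lambda>i. Q0 i \<omega>"]) (auto simp: Q0_def lvl_eq_lvl_of_past[OF j])
  have \<alpha>_range: "0 \<le> \<alpha> \<omega>" "\<alpha> \<omega> \<le> la" for \<omega>
    unfolding \<alpha>_def using lvl_nonneg[OF j] lvl_le_la by auto
  have denom_rej: "fdp_denom T (\<lambda>i. Pv i \<omega>) = D0 \<omega>" if "rej (\<lambda>i. Pv i \<omega>) j" for \<omega>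
    unfolding D0_def fdp_denom_def
    using Rset_zero_rejected[OF j that, where P'="\<lambda>i. Q0 i \<omega>"] by (simp add: Q0_def)
  have denom_cand: "fdp_denom T (\<lambda>i. Pv i \<omega>) = D1 \<omega>" if "la < Pv j \<omega>" "Pv j \<omega> \<le> ta" for \<omega>
    unfolding D1_def fdp_denom_def
    using Rset_raise_candidate[where P="\<lambda>i. Pv i \<omega>" and j=j and P'="\<lambda>i. Q1 i \<omega>", OF that]
    by (simp add: Q1_def)
  have D1_le_D0: "D1 \<omega> \<le> D0 \<omega>" for \<omega>
  proof -
    have "Rset (\<lambda>i. Q1 i \<omega>) T \<subseteq> Rset (\<lambda>i. Q0 i \<omega>) T"
      by (rule Rset_raise_subset_zero[OF j]) (simp_all add: Q0_def Q1_def)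
    then have "card (Rset (\<lambda>i. Q1 i \<omega>) T) \<le> card (Rset (\<lambda>i. Q0 i \<omega>) T)"
      by (intro card_mono finite_Rset)
    then show ?thesis unfolding D0_def D1_def fdp_denom_def by simp
  qed
  have "(\<integral>\<omega>. (if rej (\<lambda>i. Pv i \<omega>) j then 1 else 0) / fdp_denom T (\<lambda>i. Pv i \<omega>) \<partial>M)
      = (\<integral>\<omega>. indicator {..lvl_of_past j (Z \<omega>)} (Pv j \<omega>) / D0 \<omega> \<partial>M)"
    using denom_rej
    by (intro Bochner_Integration.integral_cong refl) (auto simp: \<alpha>_past[symmetric] \<alpha>_def addis_rej_def)
  also have "\<dots> \<le> (\<integral>\<omega>. \<alpha> \<omega> * K \<omega> / (ta - la) / D0 \<omega> \<partial>M)"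
    unfolding \<alpha>_past K_def
  proof (rule expected_indep_level_le[OF cuc indep, where F="Pow I" and Z=Z and h="lvl_of_past j" and D=D0])
    fix b
    show "(\<lambda>\<omega>. (if Z \<omega> = b then 1 else 0) / D0 \<omega>) \<in> borel_measurable (sigma (space M) (others_gen j))"
      "(\<lambda>\<omega>. (if Z \<omega> = b then 1 else 0) / D0 \<omega>) \<in> borel_measurable M"
      unfolding Y_pattern I_def using finite_past_codes
      by (intro measurable_past_pattern[OF Q0_others] measurable_past_pattern[OF Q0_M]; simp)+
  qed (auto simp: Z_def I_def finite_past_codes D0_ge lvl_of_past_nonneg lvl_of_past_le_la)
  also have "\<dots> \<le> (\<integral>\<omega>. \<alpha> \<omega> * K \<omega> / (ta - la) / D1 \<omega> \<partial>M)"
  proof (rule integral_divide_antimono[where B="la / (ta - la)"])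
    show "(\<lambda>\<omega>. \<alpha> \<omega> * K \<omega> / (ta - la)) \<in> borel_measurable M"
      unfolding \<alpha>_def[abs_def] K_def[abs_def] using lvl_measurable[OF Pv_measurable] Pv_measurable
      by measurable
    show "D0 \<in> borel_measurable M" "D1 \<in> borel_measurable M"
      unfolding D0_def[abs_def] D1_def[abs_def]
      by (intro fdp_denom_measurable Q0_M Q1_M)+
    show "0 \<le> \<alpha> \<omega> * K \<omega> / (ta - la)" "\<alpha> \<omega> * K \<omega> / (ta - la) \<le> la / (ta - la)" for \<omega>
      using \<alpha>_range[of \<omega>] la_less_ta by (auto simp: K_def indicator_def divide_right_mono)
  qed (use D1_ge D1_le_D0 in auto)
  also have "\<dots> = (\<integral>\<omega>. lvl (\<lambda>i. Pv i \<omega>) j * (if la < Pv j \<omega> \<and> Pv j \<omega> \<le> ta then 1 else 0)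
          / ((ta - la) * fdp_denom T (\<lambda>i. Pv i \<omega>)) \<partial>M)"
    using denom_cand by (intro Bochner_Integration.integral_cong refl) (auto simp: \<alpha>_def K_def indicator_def)
  finally show ?thesis .
qed

lemma card_nulls_rej_eq_sum: "real (card (H0 \<inter> Rset P t)) = (\<Sum>j\<in>H0 \<inter> {1..t}. if rej P j then 1 else 0)"
proof -
  have "H0 \<inter> Rset P t = {j \<in> H0 \<inter> {1..t}. rej P j}" unfolding addis_Rset_def by auto
  then have "real (card (H0 \<inter> Rset P t)) = (\<Sum>j\<in>{j \<in> H0 \<inter> {1..t}. rej P j}. 1)" by simp
  also have "\<dots> = (\<Sum>j\<in>H0 \<inter> {1..t}. if rej P j then 1 else 0)" by (rule sum.inter_filter) simp
  finally show ?thesis .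
qed

lemma integrable_fdp_denom: "integrable M (\<lambda>\<omega>. fdp_denom t (\<lambda>i. Pv i \<omega>))"
  using fdp_denom_measurable[OF Pv_measurable] fdp_denom_le fdp_denom_ge_1
  by (intro integrable_bounded[where B="real t + 1"]) (auto simp: abs_of_nonneg order.trans[OF zero_le_one])

lemma sum_expected_fdp_terms_le:
  assumes J: "J \<subseteq> {1..t}" and d: "d \<in> borel_measurable M" "\<And>\<omega>. 1 \<le> d \<omega>"
  shows "(\<Sum>j\<in>J. \<integral>\<omega>. lvl (\<lambda>i. Pv i \<omega>) j * (if la < Pv j \<omega> \<and> Pv j \<omega> \<le> ta then 1 else 0)
            / ((ta - la) * d \<omega>) \<partial>M)
    \<le> (\<integral>\<omega>. a * fdp_denom t (\<lambda>i. Pv i \<omega>) / d \<omega> \<partial>M)"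
proof -
  define summand where "summand j \<omega> = lvl (\<lambda>i. Pv i \<omega>) j * (if la < Pv j \<omega> \<and> Pv j \<omega> \<le> ta then 1 else 0)
      / ((ta - la) * d \<omega>)" for j \<omega>
  have summand_nonneg: "0 \<le> summand j \<omega>" if "1 \<le> j" for j \<omega>
    unfolding summand_def using lvl_nonneg[OF that] la_less_ta d(2)[of \<omega>] by auto
  have summand_integrable: "integrable M (summand j)" if "1 \<le> j" for j
  proof (rule integrable_bounded[where B="la / (ta - la)"])
    show "summand j \<in> borel_measurable M"
      unfolding summand_def[abs_def] using lvl_measurable[OF Pv_measurable] Pv_measurable d by measurable
    fix \<omega>
    have "lvl (\<lambda>i. Pv i \<omega>) j * (if la < Pv j \<omega> \<and> Pv j \<omega> \<le> ta then 1 else 0) \<le> la"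
      using lvl_le_la lvl_nonneg[OF that] la_nonneg by auto
    then have "summand j \<omega> \<le> la / (ta - la)"
      unfolding summand_def using lvl_nonneg[OF that] la_nonneg la_less_ta d(2)[of \<omega>]
      by (intro frac_le) auto
    then show "\<bar>summand j \<omega>\<bar> \<le> la / (ta - la)" using summand_nonneg[OF that] by simp
  qed
  have "(\<Sum>j\<in>J. integral\<^sup>L M (summand j)) \<le> (\<Sum>j\<in>{1..t}. integral\<^sup>L M (summand j))"
    using J summand_nonneg by (intro sum_mono2) (auto intro!: Bochner_Integration.integral_nonneg)
  also have "\<dots> = (\<integral>\<omega>. (\<Sum>j\<in>{1..t}. summand j \<omega>) \<partial>M)"
    using summand_integrable by (subst Bochner_Integration.integral_sum) auto
  also have "\<dots> \<le> (\<integral>\<omega>. a * fdp_denom t (\<lambda>i. Pv i \<omega>) / d \<omega> \<partial>M)"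
  proof (rule integral_mono)
    show "integrable M (\<lambda>\<omega>. \<Sum>j\<in>{1..t}. summand j \<omega>)" using summand_integrable by auto
    show "integrable M (\<lambda>\<omega>. a * fdp_denom t (\<lambda>i. Pv i \<omega>) / d \<omega>)"
    proof (rule integrable_bounded[where B="a * (real t + 1)"])
      show "(\<lambda>\<omega>. a * fdp_denom t (\<lambda>i. Pv i \<omega>) / d \<omega>) \<in> borel_measurable M"
        using fdp_denom_measurable[OF Pv_measurable] d by measurable
      fix \<omega>
      have "a * fdp_denom t (\<lambda>i. Pv i \<omega>) / d \<omega> \<le> a * fdp_denom t (\<lambda>i. Pv i \<omega>) / 1"
        using d(2)[of \<omega>] a_pos fdp_denom_ge_1[of t "\<lambda>i. Pv i \<omega>"] by (intro frac_le) auto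
      also have "\<dots> \<le> a * (real t + 1)" using a_pos fdp_denom_le by simp
      finally show "\<bar>a * fdp_denom t (\<lambda>i. Pv i \<omega>) / d \<omega>\<bar> \<le> a * (real t + 1)"
        using d(2)[of \<omega>] a_pos fdp_denom_ge_1[of t "\<lambda>i. Pv i \<omega>"] by simp
    qed
    fix \<omega>
    have "(\<Sum>j\<in>{1..t}. summand j \<omega>)
        = (\<Sum>j = 1..t. lvl (\<lambda>i. Pv i \<omega>) j * (if la < Pv j \<omega> \<and> Pv j \<omega> \<le> ta then 1 else 0) / (ta - la)) / d \<omega>"
      unfolding summand_def by (simp add: sum_divide_distrib)
    also have "\<dots> \<le> a * fdp_denom t (\<lambda>i. Pv i \<omega>) / d \<omega>"
      using fdp_numerator_le[where P="\<lambda>i. Pv i \<omega>" and T=t] d(2)[of \<omega>]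
      unfolding fdp_denom_def by (intro divide_right_mono) auto
    finally show "(\<Sum>j\<in>{1..t}. summand j \<omega>) \<le> a * fdp_denom t (\<lambda>i. Pv i \<omega>) / d \<omega>" .
  qed
  finally show ?thesis unfolding summand_def .
qed

lemma mFDR_le:
  assumes "cond_unif_conservative M a ta la W0 g Pv H0"
  shows "(\<integral>\<omega>. real (card (H0 \<inter> Rset (\<lambda>j. Pv j \<omega>) t)) \<partial>M) / (\<integral>\<omega>. fdp_denom t (\<lambda>j. Pv j \<omega>) \<partial>M) \<le> a"
proof -
  have "(\<integral>\<omega>. real (card (H0 \<inter> Rset (\<lambda>j. Pv j \<omega>) t)) \<partial>M)
      = (\<integral>\<omega>. (\<Sum>j\<in>H0 \<inter> {1..t}. indicator {\<omega>\<in>space M. rej (\<lambda>i. Pv i \<omega>) j} \<omega>) \<partial>M)"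
    unfolding card_nulls_rej_eq_sum
    by (intro Bochner_Integration.integral_cong refl sum.cong) (auto simp: indicator_def)
  also have "\<dots> = (\<Sum>j\<in>H0 \<inter> {1..t}. measure M {\<omega>\<in>space M. rej (\<lambda>i. Pv i \<omega>) j})"
    using sets_Collect_rej[OF Pv_measurable]
    by (subst Bochner_Integration.integral_sum) (auto simp: Int_absorb2 intro!: integrable_indicator_event)
  also have "\<dots> \<le> (\<Sum>j\<in>H0 \<inter> {1..t}. \<integral>\<omega>. lvl (\<lambda>i. Pv i \<omega>) j * (if la < Pv j \<omega> \<and> Pv j \<omega> \<le> ta then 1 else 0)
            / ((ta - la) * 1) \<partial>M)"
    using assms prob_rej_le_fdp_term unfolding cond_unif_conservative_def by (intro sum_mono) auto
  also have "\<dots> \<le> (\<integral>\<omega>. a * fdp_denom t (\<lambda>i. Pv i \<omega>) / 1 \<partial>M)"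
    by (rule sum_expected_fdp_terms_le) auto
  also have "\<dots> = a * (\<integral>\<omega>. fdp_denom t (\<lambda>j. Pv j \<omega>) \<partial>M)" by simp
  finally have le: "(\<integral>\<omega>. real (card (H0 \<inter> Rset (\<lambda>j. Pv j \<omega>) t)) \<partial>M)
      \<le> a * (\<integral>\<omega>. fdp_denom t (\<lambda>j. Pv j \<omega>) \<partial>M)" .
  have "(\<integral>\<omega>. 1 \<partial>M) \<le> (\<integral>\<omega>. fdp_denom t (\<lambda>j. Pv j \<omega>) \<partial>M)"
    by (intro integral_mono integrable_fdp_denom fdp_denom_ge_1) simp
  then have "1 \<le> (\<integral>\<omega>. fdp_denom t (\<lambda>j. Pv j \<omega>) \<partial>M)" by (simp add: prob_space)
  with le show ?thesis by (simp add: divide_le_eq mult.commute)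
qed

lemma FDR_le:
  assumes "cond_unif_conservative M a ta la W0 g Pv H0" "nulls_independent M Pv H0"
  shows "(\<integral>\<omega>. real (card (H0 \<inter> Rset (\<lambda>j. Pv j \<omega>) t)) / fdp_denom t (\<lambda>j. Pv j \<omega>) \<partial>M) \<le> a"
proof -
  have "(\<integral>\<omega>. real (card (H0 \<inter> Rset (\<lambda>j. Pv j \<omega>) t)) / fdp_denom t (\<lambda>j. Pv j \<omega>) \<partial>M)
      = (\<Sum>j\<in>H0 \<inter> {1..t}. \<integral>\<omega>. (if rej (\<lambda>i. Pv i \<omega>) j then 1 else 0) / fdp_denom t (\<lambda>i. Pv i \<omega>) \<partial>M)"
  proof -
    have "integrable M (\<lambda>\<omega>. (if rej (\<lambda>i. Pv i \<omega>) j then 1 else 0) / fdp_denom t (\<lambda>i. Pv i \<omega>))" for j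
    proof (rule integrable_bounded[where B=1])
      have "(\<lambda>\<omega>. (if rej (\<lambda>i. Pv i \<omega>) j then 1 else 0) :: real) \<in> borel_measurable M"
        by (rule measurable_If[OF measurable_const measurable_const sets_Collect_rej[OF Pv_measurable]]) simp_all
      then show "(\<lambda>\<omega>. (if rej (\<lambda>i. Pv i \<omega>) j then 1 else 0) / fdp_denom t (\<lambda>i. Pv i \<omega>)) \<in> borel_measurable M"
        using fdp_denom_measurable[OF Pv_measurable] by (rule borel_measurable_divide)
      show "\<bar>(if rej (\<lambda>i. Pv i \<omega>) j then 1 else 0) / fdp_denom t (\<lambda>i. Pv i \<omega>)\<bar> \<le> 1" for \<omega>
        using fdp_denom_ge_1[of t "\<lambda>i. Pv i \<omega>"] by auto
    qed
    moreover have "(\<integral>\<omega>. real (card (H0 \<inter> Rset (\<lambda>j. Pv j \<omega>) t)) / fdp_denom t (\<lambda>j. Pv j \<omega>) \<partial>M)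
      = (\<integral>\<omega>. (\<Sum>j\<in>H0 \<inter> {1..t}. (if rej (\<lambda>i. Pv i \<omega>) j then 1 else 0) / fdp_denom t (\<lambda>i. Pv i \<omega>)) \<partial>M)"
      unfolding card_nulls_rej_eq_sum by (simp add: sum_divide_distrib)
    ultimately show ?thesis by (simp add: Bochner_Integration.integral_sum)
  qed
  also have "\<dots> \<le> (\<Sum>j\<in>H0 \<inter> {1..t}. \<integral>\<omega>. lvl (\<lambda>i. Pv i \<omega>) j * (if la < Pv j \<omega> \<and> Pv j \<omega> \<le> ta then 1 else 0)
            / ((ta - la) * fdp_denom t (\<lambda>i. Pv i \<omega>)) \<partial>M)"
  proof (rule sum_mono)
    fix j assume j: "j \<in> H0 \<inter> {1..t}"
    have "space M \<in> addis_past_sets M a ta la W0 g Pv j"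
      unfolding addis_past_sets_def by (rule sigma_sets_top)
    then have "cond_conservative_on (space M) j"
      using assms(1) j unfolding cond_unif_conservative_def by blast
    then show "(\<integral>\<omega>. (if rej (\<lambda>i. Pv i \<omega>) j then 1 else 0) / fdp_denom t (\<lambda>i. Pv i \<omega>) \<partial>M)
        \<le> (\<integral>\<omega>. lvl (\<lambda>i. Pv i \<omega>) j * (if la < Pv j \<omega> \<and> Pv j \<omega> \<le> ta then 1 else 0)
            / ((ta - la) * fdp_denom t (\<lambda>i. Pv i \<omega>)) \<partial>M)"
      using j indep_pval_others[OF assms(2)] by (intro expected_rej_share_le) auto
  qed
  also have "\<dots> \<le> (\<integral>\<omega>. a * fdp_denom t (\<lambda>i. Pv i \<omega>) / fdp_denom t (\<lambda>i. Pv i \<omega>) \<partial>M)"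
    using fdp_denom_measurable[OF Pv_measurable] fdp_denom_ge_1 by (intro sum_expected_fdp_terms_le) auto
  also have "\<dots> = a"
  proof -
    have "fdp_denom t P \<noteq> 0" for P using fdp_denom_ge_1[of t P] by linarith
    then show ?thesis by (simp add: prob_space)
  qed
  finally show ?thesis .
qed

end

theorem mainTheorem3:
  fixes a ta la W0 :: real and g :: "nat \<Rightarrow> real"
    and M :: "'w measure" and Pv :: "nat \<Rightarrow> 'w \<Rightarrow> real" and H0 :: "nat set"
  assumes a: "0 < a" "a < 1"
    and ta: "0 < ta" "ta \<le> 1"
    and la: "0 \<le> la" "la < ta"
    and W0: "0 \<le> W0" "W0 \<le> a"
    and g_nonneg: "\<And>j. 0 \<le> g j"
    and g_noninc: "\<And>j. g (Suc j) \<le> g j"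
    and g_sum: "g sums 1"
    and M: "prob_space M"
    and Pv_meas: "\<And>j. Pv j \<in> borel_measurable M"
    and Pv_range: "\<And>j \<omega>. \<omega> \<in> space M \<Longrightarrow> 0 \<le> Pv j \<omega> \<and> Pv j \<omega> \<le> 1"
    and H0: "0 \<notin> H0"
  shows
    "(\<forall>t\<ge>1. \<exists>f. monotone_past t f \<and>
        (\<forall>P. addis_alpha a ta la W0 g P t =
               f (addis_rej a ta la W0 g P) (\<lambda>i. P i \<le> la) (\<lambda>i. P i \<le> ta)))
     \<and> (\<forall>P t. t \<ge> 1 \<longrightarrow> la < ta \<and> addis_alpha a ta la W0 g P t \<le> la)
     \<and> (\<forall>P t. t \<ge> 1 \<longrightarrow> addis_FDP_hat a ta la W0 g P t \<le> a)
     \<and> (cond_unif_conservative M a ta la W0 g Pv H0 \<longrightarrow>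
          (\<forall>t\<ge>1.
             (\<integral>\<omega>. real (card (H0 \<inter> addis_Rset a ta la W0 g (\<lambda>j. Pv j \<omega>) t)) \<partial>M)
             / (\<integral>\<omega>. real (max (card (addis_Rset a ta la W0 g (\<lambda>j. Pv j \<omega>) t)) 1) \<partial>M)
             \<le> a))
     \<and> (cond_unif_conservative M a ta la W0 g Pv H0 \<and> nulls_independent M Pv H0 \<longrightarrow>
          (\<forall>t\<ge>1.
             (\<integral>\<omega>. real (card (H0 \<inter> addis_Rset a ta la W0 g (\<lambda>j. Pv j \<omega>) t))
                   / real (max (card (addis_Rset a ta la W0 g (\<lambda>j. Pv j \<omega>) t)) 1) \<partial>M)
             \<le> a))"
proof -
  have "addis_pvalues a ta la W0 g M Pv"
    unfolding addis_pvalues_def addis_pvalues_axioms_def addis_params_def using assms by auto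
  then interpret addis_pvalues a ta la W0 g M Pv .
  show ?thesis
    unfolding fdp_denom_def[symmetric]
    by (intro conjI allI impI monotone_past_lvl mFDR_le FDR_le FDP_hat_le lvl_le_la la_less_ta) auto
qed

end
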